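(* Assume the setting of the context and run APAPC with parameters $\eta = \frac{1}{4\tau L}$, $\theta = \frac{1}{\eta\lambda_{\max}(\mathbf{W})}$, $\alpha = \mu$, $\tau = \min\left\{1,\frac{1}{2}\sqrt{\frac{\chi(\mathbf{W})}{\kappa}}\right\}$. Then for every $k\ge 0$, \[ \frac{1}{\eta}\|x^k - x^*\|^2 + \frac{2(1-\tau)}{\tau}\mathrm{D}_F(x_f^k, x^* ) \le \left(1 + \frac{1}{4}\min\left\{\frac{1}{\sqrt{\kappa\chi(\mathbf{W})}},\frac{1}{\chi(\mathbf{W})}\right\}\right)^{-k} C, \] where $C := \frac{1}{\eta}\|x^0 - x^*\|^2 + \frac{1}{\theta}\|y^0 - y^*\|^2_{\mathbf{W}^\dagger} + \frac{2(1-\tau)}{\tau}\mathrm{D}_F(x_f^0, x^* )$. Consequently, for every $\varepsilon>0$, $\|x^k-x^*\|^2\le\varepsilon$ holds as soon as $k \ge \left(1+4\max\{\sqrt{\kappa\chi(\mathbf{W})},\chi(\mathbf{W})\}\right)\log(\eta C/\varepsilon)$; since each iteration uses one evaluation of $\nabla F$ and one multiplication by $\mathbf{W}$, APAPC reaches $\varepsilon$-accuracy with $\mathcal{O}\big((\sqrt{\kappa\chi(\mathbf{W})}+\chi(\mathbf{W}))\log(1/\varepsilon)\big)$ gradient computations and communication rounds.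
   Context: Let $n\ge 2$, $d\ge 1$. $F:\mathbb{R}^{nd}\to\mathbb{R}$ is differentiable, $\mu$-strongly convex and $L$-smooth ($\nabla F$ is $L$-Lipschitz), $0<\mu\le L$, and $\kappa := L/\mu$. (In the application, $F(x_1,\dots,x_n)=\sum_i f_i(x_i)$ with $x_i\in\mathbb{R}^d$.) $\mathbf{W}$ is a symmetric positive semidefinite $nd\times nd$ matrix whose kernel is the consensus space $\{(x_1,\dots,x_n): x_1=\dots=x_n\}$ (e.g. $\mathbf{W}=\hat{\mathbf{W}}\otimes \mathbf{I}_d$ for a gossip matrix $\hat{\mathbf{W}}$ of a connected graph). $\lambda_{\max}(\mathbf{W})$ is its largest eigenvalue, $\lambda_{\min}^+(\mathbf{W})$ its smallest positive eigenvalue, $\chi(\mathbf{W}) := \lambda_{\max}(\mathbf{W})/\lambda_{\min}^+(\mathbf{W})$. $\mathbf{W}^\dagger:\mathrm{range}(\mathbf{W})\to\mathrm{range}(\mathbf{W})$ is the inverse of $\mathbf{W}$ restricted to $\mathrm{range}(\mathbf{W})$, and $\|y\|^2_{\mathbf{W}^\dagger} := \langle \mathbf{W}^\dagger y, y\rangle$ for $y\in\mathrm{range}(\mathbf{W})$. $x^*$ is the unique minimizer of $F$ over $\ker(\mathbf{W})$, and $y^* := -\nabla F(x^* )$ (which lies in $\mathrm{range}(\mathbf{W})$). $\mathrm{D}_F(u,v) := F(u)-F(v)-\langle \nabla F(v),u-v\rangle$ is the Bregman divergence. APAPC (Accelerated PAPC): given $x^0\in\mathbb{R}^{nd}$, $y^0\in\mathrm{range}(\mathbf{W})$,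 parameters $\eta,\theta,\alpha>0$, $\tau\in(0,1]$, set $x_f^0=x^0$ and for $k=0,1,2,\dots$: $x_g^k = \tau x^k + (1-\tau)x_f^k$; $x^{k+1/2} = (1+\eta\alpha)^{-1}\big(x^k - \eta(\nabla F(x_g^k) - \alpha x_g^k + y^k)\big)$; $y^{k+1} = y^k + \theta \mathbf{W} x^{k+1/2}$; $x^{k+1} = (1+\eta\alpha)^{-1}\big(x^k - \eta(\nabla F(x_g^k) - \alpha x_g^k + y^{k+1})\big)$; $x_f^{k+1} = x_g^k + \frac{2\tau}{2-\tau}(x^{k+1}-x^k)$. *)

theory Defs
  imports "HOL-Analysis.Analysis"
begin

definition strongly_convex :: "real \<Rightarrow> ('a::real_inner \<Rightarrow> real) \<Rightarrow> bool" where
  "strongly_convex \<mu> F \<longleftrightarrow>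
     (\<forall>x y t. 0 \<le> t \<and> t \<le> 1 \<longrightarrow>
        F (t *\<^sub>R x + (1 - t) *\<^sub>R y)
          \<le> t * F x + (1 - t) * F y - \<mu> / 2 * t * (1 - t) * (norm (x - y))\<^sup>2)"

definition consensus :: "(real^'d^'n) set" where
  "consensus = {x. \<forall>i j. x $ i = x $ j}"

definition eigenvalues :: "('a::real_vector \<Rightarrow> 'a) \<Rightarrow> real set" where
  "eigenvalues W = {l. \<exists>v. v \<noteq> 0 \<and> W v = l *\<^sub>R v}"

definition lambda_max :: "('a::real_vector \<Rightarrow> 'a) \<Rightarrow> real" where
  "lambda_max W = Max (eigenvalues W)"

definition lambda_min_pos :: "('a::real_vector \<Rightarrow> 'a) \<Rightarrow> real" where
  "lambda_min_pos W = Min {l \<in> eigenvalues W. 0 < l}"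

definition chi :: "('a::real_vector \<Rightarrow> 'a) \<Rightarrow> real" where
  "chi W = lambda_max W / lambda_min_pos W"

definition Wdag :: "('a::real_vector \<Rightarrow> 'a) \<Rightarrow> 'a \<Rightarrow> 'a" where
  "Wdag W y = (THE z. z \<in> range W \<and> W z = y)"

definition Wdag_sqnorm :: "('a::real_inner \<Rightarrow> 'a) \<Rightarrow> 'a \<Rightarrow> real" where
  "Wdag_sqnorm W y = inner (Wdag W y) y"

definition bregman :: "('a::real_inner \<Rightarrow> real) \<Rightarrow> ('a \<Rightarrow> 'a) \<Rightarrow> 'a \<Rightarrow> 'a \<Rightarrow> real" where
  "bregman F gF u v = F u - F v - inner (gF v) (u - v)"

definition apapc_step ::
  "('a::real_vector \<Rightarrow> 'a) \<Rightarrow> ('a \<Rightarrow> 'a) \<Rightarrow> real \<Rightarrow> real \<Rightarrow> real \<Rightarrow> real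
     \<Rightarrow> 'a \<times> 'a \<times> 'a \<Rightarrow> 'a \<times> 'a \<times> 'a" where
  "apapc_step gF W \<eta> \<theta> \<alpha> \<tau> s =
     (let x = fst s; y = fst (snd s); xf = snd (snd s);
          xg = \<tau> *\<^sub>R x + (1 - \<tau>) *\<^sub>R xf;
          xh = inverse (1 + \<eta> * \<alpha>) *\<^sub>R (x - \<eta> *\<^sub>R (gF xg - \<alpha> *\<^sub>R xg + y));
          y' = y + \<theta> *\<^sub>R W xh;
          x' = inverse (1 + \<eta> * \<alpha>) *\<^sub>R (x - \<eta> *\<^sub>R (gF xg - \<alpha> *\<^sub>R xg + y'));
          xf' = xg + (2 * \<tau> / (2 - \<tau>)) *\<^sub>R (x' - x)
      in (x', y', xf'))"

primrec apapc ::
  "('a::real_vector \<Rightarrow> 'a) \<Rightarrow> ('a \<Rightarrow> 'a) \<Rightarrow> real \<Rightarrow> real \<Rightarrow> real \<Rightarrow> real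
     \<Rightarrow> 'a \<Rightarrow> 'a \<Rightarrow> nat \<Rightarrow> 'a \<times> 'a \<times> 'a" where
  "apapc gF W \<eta> \<theta> \<alpha> \<tau> x0 y0 0 = (x0, y0, x0)"
| "apapc gF W \<eta> \<theta> \<alpha> \<tau> x0 y0 (Suc k) =
     apapc_step gF W \<eta> \<theta> \<alpha> \<tau> (apapc gF W \<eta> \<theta> \<alpha> \<tau> x0 y0 k)"

end

theory Submission
  imports Defs
begin

text \<open>
  APAPC contracts the Lyapunov function
  \<open>\<Psi> = (1/\<eta>) \<parallel>x - x\<^sup>*\<parallel>\<^sup>2 + (1/\<theta>) \<parallel>y - y\<^sup>*\<parallel>\<^sup>2\<^sub>W\<^sub>\<dagger> - \<eta>/(1+\<eta>\<mu>) \<parallel>y - y\<^sup>*\<parallel>\<^sup>2 + 2(1-\<tau>)/\<tau> D\<^sub>F(x\<^sub>f, x\<^sup>*)\<close>,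
  \<open>y\<^sup>* = -\<nabla>F(x\<^sup>*)\<close>. First-order optimality on the consensus space gives \<open>y\<^sup>* \<in> range W\<close>, and every
  dual step adds an element of \<open>range W\<close>, so the dual error always has the form \<open>W z\<close>, where
  \<open>\<lambda>\<^sup>+\<^sub>m\<^sub>i\<^sub>n \<langle>z, W z\<rangle> \<le> \<parallel>W z\<parallel>\<^sup>2 \<le> \<lambda>\<^sub>m\<^sub>a\<^sub>x \<langle>z, W z\<rangle>\<close>. One iteration satisfies \<open>(1 + \<delta>) \<Psi>\<^sub>k\<^sub>+\<^sub>1 \<le> \<Psi>\<^sub>k\<close>
  with \<open>\<delta> = min {1/\<surd>(\<kappa>\<chi>), 1/\<chi>}/4\<close>: the implicit primal and dual updates give exact energy
  identities, the gradient coupling is bounded below by Bregman three-point identities at the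
  extrapolated point \<open>x\<^sub>g\<close> and \<open>L\<close>-smoothness at the new \<open>x\<^sub>f\<close>, and the new dual error equals the
  residual of the primal update, whose squared norm (via cocoercivity of \<open>\<nabla>F\<close>) is paid for by the
  decrease already obtained. The iteration count follows from \<open>ln (1 + 1/(4M)) \<ge> 1/(1 + 4M)\<close>.
\<close>

section \<open>Smooth strongly convex functions\<close>

lemma has_real_derivative_along_line:
  fixes F :: "'a::real_inner \<Rightarrow> real"
  assumes grad: "\<And>x. (F has_derivative (\<lambda>h. inner (gF x) h)) (at x)"
  shows "((\<lambda>t. F (x + t *\<^sub>R d)) has_real_derivative inner (gF (x + t *\<^sub>R d)) d) (at t within S)"
proof -
  have "((\<lambda>t. x + t *\<^sub>R d) has_derivative (\<lambda>s. s *\<^sub>R d)) (at t within S)"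
    by (auto intro!: derivative_eq_intros)
  from has_derivative_compose[OF this grad]
  have "((\<lambda>t. F (x + t *\<^sub>R d)) has_derivative (\<lambda>s. inner (gF (x + t *\<^sub>R d)) (s *\<^sub>R d))) (at t within S)" .
  moreover have "(\<lambda>s. inner (gF (x + t *\<^sub>R d)) (s *\<^sub>R d)) = (*) (inner (gF (x + t *\<^sub>R d)) d)"
    by (auto simp: mult.commute)
  ultimately show ?thesis by (simp add: has_field_derivative_def)
qed

lemma strongly_convex_bregman_lower:
  fixes F :: "'a::real_inner \<Rightarrow> real"
  assumes grad: "\<And>x. (F has_derivative (\<lambda>h. inner (gF x) h)) (at x)"
    and sc: "strongly_convex \<mu> F"
  shows "\<mu> / 2 * (norm (u - v))\<^sup>2 \<le> bregman F gF u v"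
proof -
  define d where "d = u - v"
  define h where "h = (\<lambda>t. F (v + t *\<^sub>R d))"
  define q where "q = (\<lambda>t. F u - F v - \<mu> / 2 * (1 - t) * (norm d)\<^sup>2)"
  have "(h has_real_derivative inner (gF v) d) (at 0 within {0<..})"
    using has_real_derivative_along_line[OF grad, of v d 0] by (simp add: h_def)
  hence slope: "((\<lambda>t. (h t - h 0) / t) \<longlongrightarrow> inner (gF v) d) (at 0 within {0<..})"
    by (simp add: has_field_derivative_iff)
  have "(q \<longlongrightarrow> q 0) (at 0 within {0<..})"
    unfolding q_def by (intro tendsto_intros)
  moreover have "\<forall>\<^sub>F t in at 0 within {0<..}. (h t - h 0) / t \<le> q t"
  proof -
    have "\<forall>\<^sub>F t in at 0 within {0<..}. t \<in> {0::real<..<1}"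
      by (rule eventually_at_right_real) simp
    moreover have "(h t - h 0) / t \<le> q t" if t: "t \<in> {0<..<1}" for t
    proof -
      have "F (t *\<^sub>R u + (1 - t) *\<^sub>R v) \<le> t * F u + (1 - t) * F v - \<mu> / 2 * t * (1 - t) * (norm d)\<^sup>2"
        using sc t unfolding strongly_convex_def d_def by simp
      moreover have "t *\<^sub>R u + (1 - t) *\<^sub>R v = v + t *\<^sub>R d"
        by (simp add: d_def algebra_simps)
      ultimately have "h t - h 0 \<le> t * q t"
        by (simp add: h_def q_def algebra_simps)
      thus ?thesis using t by (simp add: divide_simps mult.commute)
    qed
    ultimately show ?thesis by (auto elim: eventually_mono)
  qed
  ultimately have "inner (gF v) d \<le> q 0"
    using slope by (intro tendsto_le[of "at 0 within {0<..}"]) auto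
  thus ?thesis by (simp add: q_def d_def bregman_def)
qed

lemma bregman_le_of_lipschitz_gradient:
  fixes F :: "'a::real_inner \<Rightarrow> real"
  assumes grad: "\<And>x. (F has_derivative (\<lambda>h. inner (gF x) h)) (at x)"
    and smooth: "\<And>x y. norm (gF x - gF y) \<le> L * norm (x - y)"
  shows "bregman F gF u v \<le> L / 2 * (norm (u - v))\<^sup>2"
proof -
  define d where "d = u - v"
  define \<phi> where "\<phi> = (\<lambda>t. F (v + t *\<^sub>R d) - t * inner (gF v) d - L / 2 * t\<^sup>2 * (norm d)\<^sup>2)"
  have "\<exists>D. (\<phi> has_real_derivative D) (at t) \<and> D \<le> 0" if t: "0 \<le> t" "t \<le> 1" for t :: real
  proof -
    have "inner (gF (v + t *\<^sub>R d)) d - inner (gF v) d \<le> norm (gF (v + t *\<^sub>R d) - gF v) * norm d"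
      by (metis inner_diff_left norm_cauchy_schwarz)
    also have "\<dots> \<le> L * norm (t *\<^sub>R d) * norm d"
      using smooth[of "v + t *\<^sub>R d" v] by (intro mult_right_mono) auto
    also have "\<dots> = L / 2 * (2 * t) * (norm d)\<^sup>2"
      using t by (simp add: power2_eq_square)
    finally have "inner (gF (v + t *\<^sub>R d)) d - inner (gF v) d - L / 2 * (2 * t) * (norm d)\<^sup>2 \<le> 0"
      by simp
    moreover have "(\<phi> has_real_derivative
        inner (gF (v + t *\<^sub>R d)) d - inner (gF v) d - L / 2 * (2 * t) * (norm d)\<^sup>2) (at t)"
      unfolding \<phi>_def by (auto intro!: derivative_eq_intros has_real_derivative_along_line[OF grad])
    ultimately show ?thesis by blast
  qed
  hence "\<phi> 1 \<le> \<phi> 0"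
    by (intro DERIV_nonpos_imp_nonincreasing[of 0 1 \<phi>]) auto
  thus ?thesis by (simp add: \<phi>_def d_def bregman_def)
qed

text \<open>The descent inequality, applied at the point \<open>x - (1/L) (\<nabla>F x - \<nabla>F y)\<close>, bounds the gap
  that convexity makes nonnegative.\<close>
lemma bregman_cocoercive:
  fixes F :: "'a::real_inner \<Rightarrow> real"
  assumes convex: "\<And>u v. 0 \<le> bregman F gF u v"
    and smooth: "\<And>u v. bregman F gF u v \<le> L / 2 * (norm (u - v))\<^sup>2"
    and L: "0 < L"
  shows "(norm (gF x - gF y))\<^sup>2 \<le> 2 * L * bregman F gF x y"
proof -
  define v where "v = gF x - gF y"
  define z where "z = x - (1 / L) *\<^sub>R v"
  have "bregman F gF z x \<le> L / 2 * (norm ((1 / L) *\<^sub>R v))\<^sup>2"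
    using smooth[of z x] by (simp add: z_def)
  also have "\<dots> = (1 / (2 * L)) * (norm v)\<^sup>2"
    using L by (simp add: power2_eq_square)
  finally have "bregman F gF z x \<le> (1 / (2 * L)) * (norm v)\<^sup>2" .
  moreover have "bregman F gF z y = bregman F gF z x + bregman F gF x y - (1 / L) * (norm v)\<^sup>2"
    unfolding bregman_def z_def v_def
    by (simp add: inner_diff_left inner_diff_right power2_norm_eq_inner algebra_simps)
  moreover have "bregman F gF z y \<ge> 0" by (rule convex)
  ultimately have "(1 / (2 * L)) * (norm v)\<^sup>2 \<le> bregman F gF x y"
    by linarith
  thus ?thesis using L unfolding v_def by (simp add: field_simps)
qed

lemma bregman_three_point:
  "inner (gF a - gF b) (a - c) = bregman F gF c a + bregman F gF a b - bregman F gF c b"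
  unfolding bregman_def by (simp add: inner_diff_left inner_diff_right algebra_simps)

section \<open>Symmetric positive semidefinite operators\<close>

lemma nonneg_quadratic_discriminant:
  fixes a b c :: real
  assumes nonneg: "\<And>t. 0 \<le> a + 2 * t * b + t\<^sup>2 * c" and c: "0 \<le> c"
  shows "b\<^sup>2 \<le> a * c"
proof (cases "c = 0")
  case True
  have "b = 0"
  proof (rule ccontr)
    assume "b \<noteq> 0"
    hence "2 * (- (\<bar>a\<bar> + 1) / (2 * b)) * b = - (\<bar>a\<bar> + 1)" by (simp add: field_simps)
    hence "a + 2 * (- (\<bar>a\<bar> + 1) / (2 * b)) * b + (- (\<bar>a\<bar> + 1) / (2 * b))\<^sup>2 * c < 0"
      using True by simp
    thus False using nonneg by (meson not_le)
  qed
  thus ?thesis using True by simp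
next
  case False
  hence c: "c > 0" using c by simp
  have "0 \<le> a + 2 * (- b / c) * b + (- b / c)\<^sup>2 * c" by (rule nonneg)
  also have "\<dots> = a - b\<^sup>2 / c" using c by (simp add: power2_eq_square field_simps)
  finally show ?thesis using c by (simp add: field_simps)
qed

lemma symmetric_quadratic_form_add:
  fixes W :: "'a::real_inner \<Rightarrow> 'a"
  assumes lin: "linear W" and sym: "\<And>x y. inner (W x) y = inner x (W y)"
  shows "inner (x + t *\<^sub>R y) (W (x + t *\<^sub>R y))
       = inner x (W x) + 2 * t * inner (W x) y + t\<^sup>2 * inner y (W y)"
proof -
  have "inner x (W y) = inner (W x) y" "inner y (W x) = inner (W x) y"
    using sym[of x y] by (simp_all add: inner_commute)
  thus ?thesis
    by (simp add: linear_add[OF lin] linear_cmul[OF lin] inner_add_left inner_add_right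
        power2_eq_square algebra_simps)
qed

text \<open>Minimise the Rayleigh quotient on the compact unit sphere of \<open>S\<close>; first-order optimality
  inside \<open>S\<close> makes the minimiser an eigenvector.\<close>
lemma symmetric_min_eigenvector:
  fixes W :: "'a::euclidean_space \<Rightarrow> 'a"
  assumes lin: "linear W" and sym: "\<And>x y. inner (W x) y = inner x (W y)"
    and S: "subspace S" and WS: "\<And>x. x \<in> S \<Longrightarrow> W x \<in> S" and ne: "\<exists>u\<in>S. u \<noteq> 0"
  obtains v m where "v \<in> S" "norm v = 1" "W v = m *\<^sub>R v"
    "\<And>u. u \<in> S \<Longrightarrow> m * (norm u)\<^sup>2 \<le> inner u (W u)"
proof -
  define K where "K = sphere 0 1 \<inter> S"
  have "compact K" unfolding K_def
    by (intro compact_Int_closed compact_sphere closed_subspace S)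
  moreover obtain u where "u \<in> S" "u \<noteq> 0" using ne by blast
  hence "(1 / norm u) *\<^sub>R u \<in> K" unfolding K_def by (auto simp: subspace_scale[OF S])
  hence "K \<noteq> {}" by blast
  moreover have "continuous_on K (\<lambda>u. inner u (W u))"
    using lin by (intro continuous_intros linear_continuous_on) (auto simp: linear_conv_bounded_linear)
  ultimately obtain v where v: "v \<in> K" and vmin: "\<And>y. y \<in> K \<Longrightarrow> inner v (W v) \<le> inner y (W y)"
    using continuous_attains_inf[of K "\<lambda>u. inner u (W u)"] by metis
  define m where "m = inner v (W v)"
  have vS: "v \<in> S" and nv: "norm v = 1" using v by (auto simp: K_def)
  have bound: "m * (norm u)\<^sup>2 \<le> inner u (W u)" if uS: "u \<in> S" for u
  proof (cases "u = 0")
    case True thus ?thesis by (simp add: linear_0[OF lin])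
  next
    case False
    hence "(1 / norm u) *\<^sub>R u \<in> K" using uS unfolding K_def by (auto simp: subspace_scale[OF S])
    hence "m \<le> inner ((1 / norm u) *\<^sub>R u) (W ((1 / norm u) *\<^sub>R u))" unfolding m_def by (rule vmin)
    also have "\<dots> = inner u (W u) / (norm u)\<^sup>2"
      by (simp add: linear_cmul[OF lin] power2_eq_square)
    finally show ?thesis using False by (simp add: field_simps)
  qed
  define w where "w = W v - m *\<^sub>R v"
  have wS: "w \<in> S" unfolding w_def using vS WS by (intro subspace_diff[OF S] subspace_scale[OF S]) auto
  have "(inner w w)\<^sup>2 \<le> 0 * (inner w (W w) - m * (norm w)\<^sup>2)"
  proof (rule nonneg_quadratic_discriminant)
    fix t :: real
    have "m * (norm (v + t *\<^sub>R w))\<^sup>2 \<le> inner (v + t *\<^sub>R w) (W (v + t *\<^sub>R w))"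
      using vS wS by (intro bound subspace_add[OF S] subspace_scale[OF S])
    moreover have "(norm (v + t *\<^sub>R w))\<^sup>2 = 1 + 2 * t * inner v w + t\<^sup>2 * (norm w)\<^sup>2"
      using nv by (simp only: power2_norm_eq_inner norm_eq_1)
        (simp add: inner_add_left inner_add_right inner_commute[of w v] power2_eq_square algebra_simps)
    moreover have "inner (W v) w - m * inner v w = inner w w"
      by (simp add: w_def inner_diff_left)
    ultimately show "0 \<le> 0 + 2 * t * inner w w + t\<^sup>2 * (inner w (W w) - m * (norm w)\<^sup>2)"
      unfolding symmetric_quadratic_form_add[OF lin sym] m_def[symmetric] by (simp add: algebra_simps)
  qed (use bound[OF wS] in simp)
  hence eig: "W v = m *\<^sub>R v" by (simp add: w_def)
  show ?thesis by (rule that[OF vS nv eig bound])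
qed

lemma eigenvalueI: "v \<noteq> 0 \<Longrightarrow> W v = l *\<^sub>R v \<Longrightarrow> l \<in> eigenvalues W"
  unfolding eigenvalues_def by blast

lemma finite_eigenvalues_symmetric:
  fixes W :: "'a::euclidean_space \<Rightarrow> 'a"
  assumes sym: "\<And>x y. inner (W x) y = inner x (W y)"
  shows "finite (eigenvalues W)"
proof -
  define vf where "vf = (\<lambda>l. SOME v. v \<noteq> 0 \<and> W v = l *\<^sub>R v)"
  have vf: "vf l \<noteq> 0" "W (vf l) = l *\<^sub>R vf l" if "l \<in> eigenvalues W" for l
    using someI_ex[of "\<lambda>v. v \<noteq> 0 \<and> W v = l *\<^sub>R v"] that
    unfolding vf_def eigenvalues_def by auto
  have inj: "inj_on vf (eigenvalues W)"
  proof (rule inj_onI)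
    fix l l' assume l: "l \<in> eigenvalues W" "l' \<in> eigenvalues W" "vf l = vf l'"
    hence "l *\<^sub>R vf l = l' *\<^sub>R vf l" using vf by metis
    thus "l = l'" using vf(1)[OF l(1)] by simp
  qed
  have "pairwise orthogonal (vf ` eigenvalues W)"
    unfolding pairwise_def
  proof clarify
    fix l l' assume l: "l \<in> eigenvalues W" and l': "l' \<in> eigenvalues W" and "vf l \<noteq> vf l'"
    hence "l \<noteq> l'" by auto
    have "l * inner (vf l) (vf l') = inner (W (vf l)) (vf l')" using vf[OF l] by simp
    also have "\<dots> = inner (vf l) (W (vf l'))" by (rule sym)
    also have "\<dots> = l' * inner (vf l) (vf l')" using vf[OF l'] by simp
    finally show "orthogonal (vf l) (vf l')" using \<open>l \<noteq> l'\<close> by (simp add: orthogonal_def)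
  qed
  moreover have "0 \<notin> vf ` eigenvalues W" using vf(1) by auto
  ultimately have "independent (vf ` eigenvalues W)" by (rule pairwise_orthogonal_independent)
  hence "finite (vf ` eigenvalues W)" by (rule finiteI_independent)
  thus ?thesis using inj by (rule finite_imageD)
qed

lemma symmetric_range_kernel_decomposition:
  fixes W :: "'a::euclidean_space \<Rightarrow> 'a"
  assumes lin: "linear W" and sym: "\<And>x y. inner (W x) y = inner x (W y)"
  obtains p k where "p \<in> range W" "W k = 0" "u = p + k"
proof -
  have sub: "subspace (range W)" by (rule linear_subspace_image[OF lin subspace_UNIV])
  obtain p k where p: "p \<in> span (range W)" and k: "\<And>w. w \<in> span (range W) \<Longrightarrow> orthogonal k w"
    and u: "u = p + k"
    using orthogonal_subspace_decomp_exists[of "range W" u] by metis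
  have "orthogonal k (W (W k))" by (rule k) (simp add: span_base)
  hence "W k = 0" using sym[of k "W k"] by (simp add: orthogonal_def)
  moreover have "p \<in> range W" using p sub by (metis span_eq_iff)
  ultimately show ?thesis using that u by blast
qed

lemma symmetric_range_kernel_trivial:
  fixes W :: "'a::real_inner \<Rightarrow> 'a"
  assumes sym: "\<And>x y. inner (W x) y = inner x (W y)" and "W z = 0" and "z \<in> range W"
  shows "z = 0"
proof -
  obtain u where "z = W u" using assms(3) by blast
  hence "inner z z = inner u (W z)" using sym[of u z] by simp
  thus ?thesis using assms(2) by simp
qed

lemma symmetric_in_range_if_orthogonal_kernel:
  fixes W :: "'a::euclidean_space \<Rightarrow> 'a"
  assumes lin: "linear W" and sym: "\<And>x y. inner (W x) y = inner x (W y)"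
    and orth: "\<And>k. W k = 0 \<Longrightarrow> inner y k = 0"
  shows "y \<in> range W"
proof -
  obtain p k where p: "p \<in> range W" and k: "W k = 0" and y: "y = p + k"
    by (rule symmetric_range_kernel_decomposition[OF lin sym])
  have "inner p k = 0" using p k sym by (metis inner_commute inner_zero_right rangeE)
  moreover have "inner y k = 0" by (rule orth[OF k])
  ultimately have "k = 0" using y by (simp add: inner_add_left)
  thus ?thesis using y p by simp
qed

lemma Wdag_sqnorm_image:
  fixes W :: "'a::euclidean_space \<Rightarrow> 'a"
  assumes lin: "linear W" and sym: "\<And>x y. inner (W x) y = inner x (W y)"
  shows "Wdag_sqnorm W (W u) = inner u (W u)"
proof -
  obtain p k where p: "p \<in> range W" and k: "W k = 0" and u: "u = p + k"
    by (rule symmetric_range_kernel_decomposition[OF lin sym])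
  have Wu: "W u = W p" using u k by (simp add: linear_add[OF lin])
  have "Wdag W (W u) = p"
    unfolding Wdag_def
  proof (rule the_equality)
    fix z assume z: "z \<in> range W \<and> W z = W u"
    have "z - p \<in> range W"
      using z p by (intro subspace_diff[OF linear_subspace_image[OF lin subspace_UNIV]]) auto
    moreover have "W (z - p) = 0" using z Wu by (simp add: linear_diff[OF lin])
    ultimately have "z - p = 0" by (rule symmetric_range_kernel_trivial[OF sym, rotated])
    thus "z = p" by simp
  qed (use p Wu in simp)
  moreover have "inner k (W p) = 0" using sym[of k p] k by simp
  ultimately show ?thesis using u Wu by (simp add: Wdag_sqnorm_def inner_add_left)
qed

lemma quadratic_form_le_lambda_max:
  fixes W :: "'a::euclidean_space \<Rightarrow> 'a"
  assumes lin: "linear W" and sym: "\<And>x y. inner (W x) y = inner x (W y)"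
  shows "inner u (W u) \<le> lambda_max W * (norm u)\<^sup>2"
proof -
  have lin': "linear (\<lambda>x. - W x)" using lin by (simp add: linear_compose_neg)
  have sym': "\<And>x y. inner (- W x) y = inner x (- W y)" using sym by simp
  have "\<exists>u::'a. u \<noteq> 0" using nonzero_Basis SOME_Basis by metis
  then obtain v m where v: "norm v = 1" "- W v = m *\<^sub>R v"
    and bound: "\<And>u. m * (norm u)\<^sup>2 \<le> inner u (- W u)"
    using symmetric_min_eigenvector[OF lin' sym' subspace_UNIV] by (metis UNIV_I)
  have "W v = (- m) *\<^sub>R v" using arg_cong[OF v(2), of uminus] by simp
  moreover have "v \<noteq> 0" using v(1) by auto
  ultimately have "- m \<in> eigenvalues W" by (rule eigenvalueI[rotated])
  moreover have "l \<le> - m" if "l \<in> eigenvalues W" for l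
  proof -
    have "\<exists>u. u \<noteq> 0 \<and> W u = l *\<^sub>R u" using that by (simp add: eigenvalues_def)
    then obtain u where u: "u \<noteq> 0" "W u = l *\<^sub>R u" by blast
    hence "m * (norm u)\<^sup>2 \<le> - (l * (norm u)\<^sup>2)" using bound[of u] by (simp add: power2_norm_eq_inner)
    hence "l * (norm u)\<^sup>2 \<le> - m * (norm u)\<^sup>2" by simp
    moreover have "0 < (norm u)\<^sup>2" using u by simp
    ultimately show ?thesis by (meson mult_le_cancel_right_pos)
  qed
  ultimately have "lambda_max W = - m"
    unfolding lambda_max_def by (metis Max_eqI finite_eigenvalues_symmetric[OF sym])
  thus ?thesis using bound[of u] by simp
qed

lemma lambda_min_pos_bounds:
  fixes W :: "'a::euclidean_space \<Rightarrow> 'a"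
  assumes lin: "linear W" and sym: "\<And>x y. inner (W x) y = inner x (W y)"
    and psd: "\<And>x. 0 \<le> inner x (W x)" and nz: "\<exists>u. W u \<noteq> 0"
  shows "0 < lambda_min_pos W" "lambda_min_pos W \<le> lambda_max W"
    and "\<And>u. u \<in> range W \<Longrightarrow> lambda_min_pos W * (norm u)\<^sup>2 \<le> inner u (W u)"
proof -
  have sub: "subspace (range W)" by (rule linear_subspace_image[OF lin subspace_UNIV])
  have "\<exists>u\<in>range W. u \<noteq> 0" using nz by auto
  then obtain v m where v: "v \<in> range W" "norm v = 1" "W v = m *\<^sub>R v"
    and bound: "\<And>u. u \<in> range W \<Longrightarrow> m * (norm u)\<^sup>2 \<le> inner u (W u)"
    using symmetric_min_eigenvector[OF lin sym sub] by blast
  have "m \<noteq> 0"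
    using v symmetric_range_kernel_trivial[OF sym, of v] by auto
  moreover have "m = inner v (W v)" using v by (simp add: norm_eq_1)
  ultimately have "0 < m" using psd[of v] by simp
  define P where "P = {l \<in> eigenvalues W. 0 < l}"
  have fin: "finite P" unfolding P_def using finite_eigenvalues_symmetric[OF sym] by simp
  have "v \<noteq> 0" using v(2) by auto
  hence "m \<in> P" unfolding P_def using eigenvalueI[of v W m] v(3) \<open>0 < m\<close> by blast
  hence min: "lambda_min_pos W \<in> P" "lambda_min_pos W \<le> m"
    unfolding lambda_min_pos_def P_def[symmetric] using fin by (auto intro: Min_in)
  show "0 < lambda_min_pos W" using min(1) by (simp add: P_def)
  show "lambda_min_pos W \<le> lambda_max W"
    using min(1) finite_eigenvalues_symmetric[OF sym] unfolding P_def lambda_max_def by simp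
  show "lambda_min_pos W * (norm u)\<^sup>2 \<le> inner u (W u)" if "u \<in> range W" for u
    using bound[OF that] min(2) by (meson mult_right_mono order_trans zero_le_power2)
qed

text \<open>Cauchy--Schwarz for the semi-inner product \<open>\<langle>u, W v\<rangle>\<close>.\<close>
lemma norm_image_sq_le_lambda_max:
  fixes W :: "'a::euclidean_space \<Rightarrow> 'a"
  assumes lin: "linear W" and sym: "\<And>x y. inner (W x) y = inner x (W y)"
    and psd: "\<And>x. 0 \<le> inner x (W x)"
  shows "(norm (W x))\<^sup>2 \<le> lambda_max W * inner x (W x)"
proof -
  define n where "n = (norm (W x))\<^sup>2"
  have "(inner (W x) (W x))\<^sup>2 \<le> inner x (W x) * inner (W x) (W (W x))"
  proof (rule nonneg_quadratic_discriminant)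
    show "0 \<le> inner x (W x) + 2 * t * inner (W x) (W x) + t\<^sup>2 * inner (W x) (W (W x))" for t
      using psd[of "x + t *\<^sub>R W x"] unfolding symmetric_quadratic_form_add[OF lin sym] .
  qed (rule psd)
  also have "\<dots> \<le> inner x (W x) * (lambda_max W * n)"
    unfolding n_def by (intro mult_left_mono quadratic_form_le_lambda_max[OF lin sym] psd)
  also have "inner (W x) (W x) = n" by (simp add: n_def power2_norm_eq_inner)
  finally have "n * n \<le> (lambda_max W * inner x (W x)) * n"
    by (simp add: power2_eq_square algebra_simps)
  show ?thesis
  proof (cases "W x = 0")
    case False
    hence "0 < n" by (simp add: n_def)
    with \<open>n * n \<le> _\<close> have "n \<le> lambda_max W * inner x (W x)" by simp
    thus ?thesis by (simp add: n_def)
  qed simp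
qed

lemma lambda_min_pos_le_norm_image_sq:
  fixes W :: "'a::euclidean_space \<Rightarrow> 'a"
  assumes lin: "linear W" and sym: "\<And>x y. inner (W x) y = inner x (W y)"
    and psd: "\<And>x. 0 \<le> inner x (W x)" and nz: "\<exists>u. W u \<noteq> 0"
  shows "lambda_min_pos W * inner z (W z) \<le> (norm (W z))\<^sup>2"
proof -
  obtain p k where p: "p \<in> range W" and k: "W k = 0" and z: "z = p + k"
    by (rule symmetric_range_kernel_decomposition[OF lin sym])
  have Wz: "W z = W p" using z k by (simp add: linear_add[OF lin])
  have "inner k (W p) = 0" using sym[of k p] k by simp
  hence qz: "inner z (W z) = inner p (W p)" using z Wz by (simp add: inner_add_left)
  define q where "q = inner p (W p)"
  have q0: "0 \<le> q" unfolding q_def by (rule psd)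
  have "lambda_min_pos W * q * q \<le> lambda_min_pos W * (norm p * norm (W p)) * (norm p * norm (W p))"
    using norm_cauchy_schwarz[of p "W p"] q0 lambda_min_pos_bounds(1)[OF lin sym psd nz]
    unfolding q_def by (intro mult_mono mult_left_mono) auto
  also have "\<dots> = (lambda_min_pos W * (norm p)\<^sup>2) * (norm (W p))\<^sup>2"
    by (simp add: power2_eq_square algebra_simps)
  also have "\<dots> \<le> q * (norm (W p))\<^sup>2"
    unfolding q_def by (intro mult_right_mono lambda_min_pos_bounds(3)[OF lin sym psd nz p]) simp
  finally have "lambda_min_pos W * q * q \<le> q * (norm (W p))\<^sup>2" .
  moreover have "0 < q" if "q \<noteq> 0" using q0 that by simp
  ultimately show ?thesis
    using qz Wz unfolding q_def[symmetric] by (cases "q = 0") (simp_all add: mult.commute)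
qed

section \<open>One step of APAPC\<close>

lemma norm_add3_sq_le:
  fixes u v w :: "'a::real_inner"
  shows "(norm (u + v + w))\<^sup>2 \<le> 2 * (norm u)\<^sup>2 + 4 * (norm v)\<^sup>2 + 4 * (norm w)\<^sup>2"
proof -
  have sq: "(norm (x + y))\<^sup>2 \<le> 2 * (norm x)\<^sup>2 + 2 * (norm y)\<^sup>2" for x y :: 'a
  proof -
    have "(norm (x + y))\<^sup>2 + (norm (x - y))\<^sup>2 = 2 * (norm x)\<^sup>2 + 2 * (norm y)\<^sup>2"
      by (simp add: power2_norm_eq_inner inner_add_left inner_add_right inner_diff_left
          inner_diff_right inner_commute[of y x])
    thus ?thesis using zero_le_power2[of "norm (x - y)"] by linarith
  qed
  have "(norm (u + (v + w)))\<^sup>2 \<le> 2 * (norm u)\<^sup>2 + 2 * (norm (v + w))\<^sup>2" by (rule sq)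
  also have "\<dots> \<le> 2 * (norm u)\<^sup>2 + 2 * (2 * (norm v)\<^sup>2 + 2 * (norm w)\<^sup>2)" using sq[of v w] by simp
  finally show ?thesis by (simp add: add.assoc)
qed

lemma update_difference:
  fixes x x' xg g e :: "'a::real_vector"
  assumes "(1 + \<eta> * \<mu>) *\<^sub>R x' = x - \<eta> *\<^sub>R (g - \<mu> *\<^sub>R xg + e)"
  shows "x - x' = \<eta> *\<^sub>R (g + \<mu> *\<^sub>R (x' - xg) + e)"
proof -
  have "x = (x - \<eta> *\<^sub>R (g - \<mu> *\<^sub>R xg + e)) + \<eta> *\<^sub>R (g - \<mu> *\<^sub>R xg + e)" by simp
  also have "\<dots> = (1 + \<eta> * \<mu>) *\<^sub>R x' + \<eta> *\<^sub>R (g - \<mu> *\<^sub>R xg + e)" by (simp only: assms)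
  finally show ?thesis by (simp add: algebra_simps)
qed

lemma primal_update_identity:
  fixes x x' xg xs g e :: "'a::real_inner"
  assumes upd: "(1 + \<eta> * \<mu>) *\<^sub>R x' = x - \<eta> *\<^sub>R (g - \<mu> *\<^sub>R xg + e)" and \<eta>: "\<eta> \<noteq> 0"
  shows "(1/\<eta>) * (norm (x' - xs))\<^sup>2 + \<mu> * (norm (x' - xs))\<^sup>2 + 2 * inner e (x' - xs)
       = (1/\<eta>) * (norm (x - xs))\<^sup>2 - (1/\<eta>) * (norm (x' - x))\<^sup>2 - 2 * inner g (x' - xs)
         - \<mu> * (norm (x' - xg))\<^sup>2 + \<mu> * (norm (xg - xs))\<^sup>2"
proof -
  define u where "u = x' - xs"
  from update_difference[OF upd]
  have I: "inner u (x - x') = \<eta> * (inner g u + \<mu> * inner (x' - xg) u + inner e u)"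
    by (simp add: inner_add_right inner_commute)
  have N: "(norm (x - xs))\<^sup>2 = (norm u)\<^sup>2 + 2 * inner u (x - x') + (norm (x' - x))\<^sup>2"
    using dot_norm[of u "x - x'"] by (simp add: u_def norm_minus_commute)
  have P: "\<mu> * (2 * inner (x' - xg) u) = \<mu> * (norm u)\<^sup>2 + \<mu> * (norm (x' - xg))\<^sup>2 - \<mu> * (norm (xg - xs))\<^sup>2"
  proof -
    have "x' - xg = u - (xg - xs)" by (simp add: u_def)
    hence "2 * inner (x' - xg) u = (norm u)\<^sup>2 + (norm (x' - xg))\<^sup>2 - (norm (xg - xs))\<^sup>2"
      by (simp only: power2_norm_eq_inner) (simp add: inner_diff_left inner_diff_right inner_commute)
    thus ?thesis by (simp only: right_diff_distrib distrib_left)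
  qed
  have "(1/\<eta>) * (norm (x - xs))\<^sup>2 = (1/\<eta>) * (norm u)\<^sup>2 + 2 * inner g u + \<mu> * (2 * inner (x' - xg) u)
      + 2 * inner e u + (1/\<eta>) * (norm (x' - x))\<^sup>2"
    unfolding N I using \<eta> by (simp add: field_simps)
  with P show ?thesis by (simp add: u_def inner_commute)
qed

lemma dual_potential_identity:
  fixes W :: "'a::real_inner \<Rightarrow> 'a"
  assumes lin: "linear W" and sym: "\<And>x y. inner (W x) y = inner x (W y)" and \<theta>: "\<theta> \<noteq> 0"
  shows "(1/\<theta>) * inner (z + \<theta> *\<^sub>R h) (W (z + \<theta> *\<^sub>R h)) - \<beta> * (norm (W (z + \<theta> *\<^sub>R h)))\<^sup>2
       = (1/\<theta>) * inner z (W z) - \<beta> * (norm (W z))\<^sup>2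
         + 2 * inner (W (z + \<theta> *\<^sub>R h)) (h - (\<beta> * \<theta>) *\<^sub>R W h)
         - \<theta> * inner h (W h) + \<beta> * \<theta>\<^sup>2 * (norm (W h))\<^sup>2"
proof -
  define a b c where "a = inner z (W z)" and "b = inner (W z) h" and "c = inner h (W h)"
  define p q r where "p = inner (W z) (W z)" and "q = inner (W z) (W h)" and "r = inner (W h) (W h)"
  have Wzh: "W (z + \<theta> *\<^sub>R h) = W z + \<theta> *\<^sub>R W h"
    by (simp add: linear_add[OF lin] linear_cmul[OF lin])
  have q1: "inner (z + \<theta> *\<^sub>R h) (W (z + \<theta> *\<^sub>R h)) = a + 2 * \<theta> * b + \<theta>\<^sup>2 * c"
    unfolding a_def b_def c_def by (rule symmetric_quadratic_form_add[OF lin sym])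
  have q2: "inner (W (z + \<theta> *\<^sub>R h)) (W (z + \<theta> *\<^sub>R h)) = p + 2 * \<theta> * q + \<theta>\<^sup>2 * r"
    unfolding Wzh p_def q_def r_def
    by (simp add: inner_add_left inner_add_right inner_commute power2_eq_square algebra_simps)
  have q3: "inner (W (z + \<theta> *\<^sub>R h)) (h - (\<beta> * \<theta>) *\<^sub>R W h)
      = b + \<theta> * c - \<beta> * \<theta> * q - \<beta> * \<theta>\<^sup>2 * r"
    unfolding Wzh b_def c_def q_def r_def
    by (simp add: inner_add_left inner_add_right inner_diff_left inner_diff_right inner_commute
        power2_eq_square)
  show ?thesis
    unfolding power2_norm_eq_inner q1 q2 q3 a_def[symmetric] c_def[symmetric] p_def[symmetric] r_def[symmetric]
    using \<theta> by (simp add: field_simps power2_eq_square)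
qed

lemma gradient_gap_identity:
  fixes F :: "'a::real_inner \<Rightarrow> real"
  assumes \<tau>: "0 < \<tau>" "\<tau> < 2"
    and xg: "xg = \<tau> *\<^sub>R x + (1 - \<tau>) *\<^sub>R xf"
    and xf': "xf' = xg + (2 * \<tau> / (2 - \<tau>)) *\<^sub>R (x' - x)"
  shows "2 * inner (gF xg - gF xs) (x' - xs)
    = 2 * bregman F gF xs xg + bregman F gF xg xs
      + (2 * (1 - \<tau>) / \<tau>) * bregman F gF xf xg - (2 * (1 - \<tau>) / \<tau>) * bregman F gF xf xs
      + ((2 - \<tau>) / \<tau>) * bregman F gF xf' xs - ((2 - \<tau>) / \<tau>) * bregman F gF xf' xg"
proof -
  define g where "g = gF xg - gF xs"
  define k where "k = 2 * (1 - \<tau>) / \<tau>"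
  define a where "a = (2 - \<tau>) / \<tau>"
  have "xg - xf = \<tau> *\<^sub>R (x - xf)" by (simp add: xg algebra_simps)
  hence "(k / 2) *\<^sub>R (xg - xf) = (1 - \<tau>) *\<^sub>R (x - xf)" using \<tau> by (simp add: k_def)
  hence "x' - xs = (x' - x) + (xg - xs) + (k / 2) *\<^sub>R (xg - xf)" by (simp add: xg algebra_simps)
  hence split: "2 * inner g (x' - xs) = 2 * inner g (x' - x) + 2 * inner g (xg - xs) + k * inner g (xg - xf)"
    by (simp only: inner_add_right inner_scaleR_right) simp
  have "x' - x = ((2 - \<tau>) / (2 * \<tau>)) *\<^sub>R (xf' - xg)" using \<tau> by (simp add: xf')
  hence "inner g (x' - x) = ((2 - \<tau>) / (2 * \<tau>)) * inner g (xf' - xg)" by simp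
  also have "inner g (xf' - xg) = - inner g (xg - xf')" by (simp add: inner_diff_right)
  also have "inner g (xg - xf') = bregman F gF xf' xg + bregman F gF xg xs - bregman F gF xf' xs"
    using bregman_three_point[of gF xg xs xf' F] by (simp add: g_def)
  also have "- (bregman F gF xf' xg + bregman F gF xg xs - bregman F gF xf' xs)
      = bregman F gF xf' xs - bregman F gF xg xs - bregman F gF xf' xg" by simp
  finally have "2 * inner g (x' - x)
      = a * (bregman F gF xf' xs - bregman F gF xg xs - bregman F gF xf' xg)"
    unfolding a_def using \<tau> by simp
  hence "2 * inner g (x' - x)
      = a * bregman F gF xf' xs - a * bregman F gF xg xs - a * bregman F gF xf' xg"
    by (simp add: algebra_simps)
  moreover have "2 * inner g (xg - xs) = 2 * bregman F gF xs xg + 2 * bregman F gF xg xs"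
    using bregman_three_point[of gF xg xs xs F] by (simp add: g_def bregman_def)
  moreover have "inner g (xg - xf) = bregman F gF xf xg + bregman F gF xg xs - bregman F gF xf xs"
    using bregman_three_point[of gF xg xs xf F] by (simp add: g_def)
  hence "k * inner g (xg - xf) = k * bregman F gF xf xg + k * bregman F gF xg xs - k * bregman F gF xf xs"
    by (simp only: distrib_left right_diff_distrib)
  moreover have "a * bregman F gF xg xs = bregman F gF xg xs + k * bregman F gF xg xs"
    using \<tau> by (simp add: a_def k_def field_simps)
  ultimately show ?thesis
    unfolding g_def[symmetric] k_def[symmetric] a_def[symmetric] using split by linarith
qed

lemma gradient_gap_lower_bound:
  fixes F :: "'a::real_inner \<Rightarrow> real"
  assumes smooth: "bregman F gF xf' xg \<le> L / 2 * (norm (xf' - xg))\<^sup>2"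
    and \<tau>: "0 < \<tau>" "\<tau> < 2"
    and xg: "xg = \<tau> *\<^sub>R x + (1 - \<tau>) *\<^sub>R xf"
    and xf': "xf' = xg + (2 * \<tau> / (2 - \<tau>)) *\<^sub>R (x' - x)"
  shows "2 * bregman F gF xs xg + bregman F gF xg xs
      + (2 * (1 - \<tau>) / \<tau>) * bregman F gF xf xg - (2 * (1 - \<tau>) / \<tau>) * bregman F gF xf xs
      + ((2 - \<tau>) / \<tau>) * bregman F gF xf' xs - 2 * \<tau> * L / (2 - \<tau>) * (norm (x' - x))\<^sup>2
    \<le> 2 * inner (gF xg - gF xs) (x' - xs)"
proof -
  have "norm (xf' - xg) = (2 * \<tau> / (2 - \<tau>)) * norm (x' - x)" using \<tau> by (simp add: xf')
  hence norm_sq: "(norm (xf' - xg))\<^sup>2 = (2 * \<tau> / (2 - \<tau>))\<^sup>2 * (norm (x' - x))\<^sup>2"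
    by (simp only: power_mult_distrib)
  have "\<tau> \<noteq> 0" "2 - \<tau> \<noteq> 0" using \<tau> by auto
  hence "((2 - \<tau>) / \<tau>) * (L / 2 * (norm (xf' - xg))\<^sup>2) = 2 * \<tau> * L / (2 - \<tau>) * (norm (x' - x))\<^sup>2"
    unfolding norm_sq by (simp add: power2_eq_square divide_simps)
  moreover have "((2 - \<tau>) / \<tau>) * bregman F gF xf' xg \<le> ((2 - \<tau>) / \<tau>) * (L / 2 * (norm (xf' - xg))\<^sup>2)"
    using smooth \<tau> by (intro mult_left_mono) auto
  ultimately show ?thesis
    using gradient_gap_identity[OF \<tau> xg xf', where F = F and gF = gF and xs = xs] by linarith
qed

lemma dual_potential_le_norm_image:
  fixes W :: "'a::real_inner \<Rightarrow> 'a"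
  assumes lmin: "lmin * inner z (W z) \<le> (norm (W z))\<^sup>2" and pos: "0 < lmin" "0 < \<theta>" "0 \<le> \<beta>"
    and \<theta>: "\<theta> * \<eta> * lmax = 1"
  shows "(1/\<theta>) * inner z (W z) - \<beta> * (norm (W z))\<^sup>2 \<le> \<eta> * (lmax / lmin) * (norm (W z))\<^sup>2"
proof -
  have "(1/\<theta>) * inner z (W z) \<le> (1/\<theta>) * ((norm (W z))\<^sup>2 / lmin)"
    using lmin pos by (intro mult_left_mono) (simp_all add: field_simps)
  also have "\<dots> = \<eta> * (lmax / lmin) * (norm (W z))\<^sup>2"
    using \<theta> pos by (simp add: field_simps)
  moreover have "0 \<le> \<beta> * (norm (W z))\<^sup>2" using pos by simp
  ultimately show ?thesis by linarith
qed

lemma dual_potential_residual_bound: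
  fixes W :: "'a::real_inner \<Rightarrow> 'a"
  assumes lmin: "lmin * inner z (W z) \<le> (norm (W z))\<^sup>2"
    and pos: "0 < lmin" "0 < \<eta>" "0 < \<theta>" "0 \<le> \<beta>" "0 \<le> \<delta>" "0 \<le> \<mu>"
    and \<theta>: "\<theta> * \<eta> * lmax = 1"
    and res: "W z = - ((1/\<eta>) *\<^sub>R d + g + \<mu> *\<^sub>R r)"
    and coco: "(norm g)\<^sup>2 \<le> 2 * L * D"
    and c3: "4 * \<delta> * (lmax / lmin) \<le> 1" and c4: "8 * \<delta> * \<eta> * (lmax / lmin) * L \<le> 1"
    and c5: "4 * \<delta> * \<eta> * (lmax / lmin) * \<mu> \<le> 1" and "0 \<le> D"
  shows "\<delta> * ((1/\<theta>) * inner z (W z) - \<beta> * (norm (W z))\<^sup>2)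
    \<le> (1/(2*\<eta>)) * (norm d)\<^sup>2 + \<mu> * (norm r)\<^sup>2 + D"
proof -
  define c where "c = lmax / lmin"
  have "1/\<theta> = \<eta> * lmax" using \<theta> pos by (simp add: field_simps)
  hence "0 < \<eta> * lmax" using pos by (metis zero_less_divide_1_iff)
  hence "0 \<le> c" using pos unfolding c_def by (simp add: zero_less_mult_iff)
  have "\<delta> * ((1/\<theta>) * inner z (W z) - \<beta> * (norm (W z))\<^sup>2) \<le> \<delta> * (\<eta> * c * (norm (W z))\<^sup>2)"
    unfolding c_def using dual_potential_le_norm_image[where W = W and z = z, OF lmin pos(1,3,4) \<theta>] pos
    by (intro mult_left_mono)
  also have "\<dots> \<le> \<delta> * (\<eta> * c * (2 * ((1/\<eta>)\<^sup>2 * (norm d)\<^sup>2) + 4 * (2 * L * D) + 4 * (\<mu>\<^sup>2 * (norm r)\<^sup>2)))"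
  proof -
    have "(norm (W z))\<^sup>2 \<le> 2 * (norm ((1/\<eta>) *\<^sub>R d))\<^sup>2 + 4 * (norm g)\<^sup>2 + 4 * (norm (\<mu> *\<^sub>R r))\<^sup>2"
      unfolding res norm_minus_cancel by (rule norm_add3_sq_le)
    also have "\<dots> \<le> 2 * ((1/\<eta>)\<^sup>2 * (norm d)\<^sup>2) + 4 * (2 * L * D) + 4 * (\<mu>\<^sup>2 * (norm r)\<^sup>2)"
      using coco pos by (simp add: power_mult_distrib power_divide mult_ac)
    finally show ?thesis using pos \<open>0 \<le> c\<close> by (intro mult_left_mono) auto
  qed
  also have "\<dots> = (2 * \<delta> * c / \<eta>) * (norm d)\<^sup>2 + (8 * \<delta> * \<eta> * c * L) * D
      + (4 * \<delta> * \<eta> * c * \<mu>) * (\<mu> * (norm r)\<^sup>2)"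
    using pos by (simp add: power2_eq_square field_simps)
  also have "\<dots> \<le> (1/(2*\<eta>)) * (norm d)\<^sup>2 + 1 * D + 1 * (\<mu> * (norm r)\<^sup>2)"
  proof (intro add_mono mult_right_mono)
    show "2 * \<delta> * c / \<eta> \<le> 1 / (2 * \<eta>)" using c3 pos unfolding c_def by (simp add: field_simps)
  qed (use c4 c5 pos \<open>0 \<le> D\<close> in \<open>simp_all add: c_def\<close>)
  finally show ?thesis by simp
qed

lemma apapc_step_components:
  assumes "apapc_step gF W \<eta> \<theta> \<alpha> \<tau> (x, y, xf) = (x', y', xf')"
  defines "xg \<equiv> \<tau> *\<^sub>R x + (1 - \<tau>) *\<^sub>R xf"
  shows "y' = y + \<theta> *\<^sub>R W (inverse (1 + \<eta> * \<alpha>) *\<^sub>R (x - \<eta> *\<^sub>R (gF xg - \<alpha> *\<^sub>R xg + y)))"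
    and "x' = inverse (1 + \<eta> * \<alpha>) *\<^sub>R (x - \<eta> *\<^sub>R (gF xg - \<alpha> *\<^sub>R xg + y'))"
    and "xf' = xg + (2 * \<tau> / (2 - \<tau>)) *\<^sub>R (x' - x)"
  using assms(1)[symmetric] by (simp_all add: apapc_step_def Let_def xg_def)

locale apapc_contraction =
  fixes F :: "'a::euclidean_space \<Rightarrow> real" and gF W :: "'a \<Rightarrow> 'a"
    and \<mu> L lmin lmax \<eta> \<theta> \<tau> \<delta> :: real and xs :: 'a
  assumes bregman_lower: "\<And>u v. \<mu> / 2 * (norm (u - v))\<^sup>2 \<le> bregman F gF u v"
    and bregman_upper: "\<And>u v. bregman F gF u v \<le> L / 2 * (norm (u - v))\<^sup>2"
    and cocoercive: "\<And>u v. (norm (gF u - gF v))\<^sup>2 \<le> 2 * L * bregman F gF u v"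
    and W_linear: "linear W" and W_symmetric: "\<And>x y. inner (W x) y = inner x (W y)"
    and lmax_bound: "\<And>x. (norm (W x))\<^sup>2 \<le> lmax * inner x (W x)"
    and lmin_bound: "\<And>x. lmin * inner x (W x) \<le> (norm (W x))\<^sup>2"
    and xs_kernel: "W xs = 0"
    and eta_pos: "0 < \<eta>" and mu_pos: "0 < \<mu>" and tau_pos: "0 < \<tau>" and tau_le_1: "\<tau> \<le> 1"
    and theta_pos: "0 < \<theta>" and lmin_pos: "0 < lmin" and theta_eta_lmax: "\<theta> * \<eta> * lmax = 1"
    and delta_nonneg: "0 \<le> \<delta>" and delta_le_eta_mu: "\<delta> \<le> \<eta> * \<mu>"
    and delta_le_tau: "2 * (1 - \<tau>) * \<delta> \<le> \<tau>"
    and delta_chi: "4 * \<delta> * (lmax / lmin) \<le> 1"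
    and delta_chi_L: "8 * \<delta> * \<eta> * (lmax / lmin) * L \<le> 1"
    and delta_chi_mu: "4 * \<delta> * \<eta> * (lmax / lmin) * \<mu> \<le> 1"
    and eta_tau_L: "4 * \<eta> * \<tau> * L \<le> 2 - \<tau>"
begin

lemma bregman_nonneg: "0 \<le> bregman F gF u v"
proof -
  have "0 \<le> \<mu> / 2 * (norm (u - v))\<^sup>2" using mu_pos by simp
  thus ?thesis using bregman_lower[of u v] by linarith
qed

text \<open>The subtracted term is produced by the implicit \<open>x\<close>-update; the first term dominates it
  because \<open>\<theta> \<eta> \<lambda>\<^sub>m\<^sub>a\<^sub>x = 1\<close>.\<close>
definition dual_potential :: "'a \<Rightarrow> real" where
  "dual_potential y = (1/\<theta>) * Wdag_sqnorm W y - \<eta> / (1 + \<eta> * \<mu>) * (norm y)\<^sup>2"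

definition lyapunov :: "'a \<times> 'a \<times> 'a \<Rightarrow> real" where
  "lyapunov s = (case s of (x, y, xf) \<Rightarrow>
     (1/\<eta>) * (norm (x - xs))\<^sup>2 + dual_potential (y + gF xs) + (2 * (1 - \<tau>) / \<tau>) * bregman F gF xf xs)"

lemma dual_potential_image:
  "dual_potential (W z) = (1/\<theta>) * inner z (W z) - \<eta> / (1 + \<eta> * \<mu>) * (norm (W z))\<^sup>2"
  unfolding dual_potential_def Wdag_sqnorm_image[OF W_linear W_symmetric] ..

lemma dual_weight_le: "\<eta> / (1 + \<eta> * \<mu>) \<le> \<eta>"
proof -
  have "0 < \<eta> * \<mu>" using eta_pos mu_pos by simp
  hence "\<eta> / (1 + \<eta> * \<mu>) \<le> \<eta> / 1"
    using eta_pos by (intro divide_left_mono) simp_all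
  thus ?thesis by simp
qed

lemma dual_correction_le: "\<eta> / (1 + \<eta> * \<mu>) * \<theta>\<^sup>2 * (norm (W h))\<^sup>2 \<le> \<theta> * inner h (W h)"
proof -
  have "\<eta> / (1 + \<eta> * \<mu>) * \<theta>\<^sup>2 * (norm (W h))\<^sup>2 \<le> \<eta> * \<theta>\<^sup>2 * (lmax * inner h (W h))"
    using dual_weight_le lmax_bound[of h] eta_pos by (intro mult_mono) simp_all
  also have "\<dots> = \<theta> * inner h (W h)" using theta_eta_lmax by (simp add: power2_eq_square algebra_simps)
  finally show ?thesis .
qed

lemma dual_potential_nonneg: "0 \<le> dual_potential (W z)"
proof -
  have "\<eta> / (1 + \<eta> * \<mu>) * (norm (W z))\<^sup>2 \<le> \<eta> * (norm (W z))\<^sup>2"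
    using dual_weight_le by (intro mult_right_mono) simp_all
  also have "\<dots> \<le> \<eta> * (lmax * inner z (W z))"
    using eta_pos by (intro mult_left_mono lmax_bound) simp
  also have "\<dots> = (1/\<theta>) * inner z (W z)"
    using theta_eta_lmax theta_pos by (simp add: field_simps)
  finally show ?thesis unfolding dual_potential_image by simp
qed

lemma extrapolation_weight_le: "2 * \<tau> * L / (2 - \<tau>) \<le> 1 / (2 * \<eta>)"
  using eta_tau_L eta_pos tau_le_1 by (simp add: field_simps)

lemma step_primal_update:
  assumes "apapc_step gF W \<eta> \<theta> \<mu> \<tau> (x, y, xf) = (x', y', xf')"
  defines "xg \<equiv> \<tau> *\<^sub>R x + (1 - \<tau>) *\<^sub>R xf"
  shows "(1 + \<eta> * \<mu>) *\<^sub>R x' = x - \<eta> *\<^sub>R ((gF xg - gF xs) - \<mu> *\<^sub>R xg + (y' + gF xs))"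
proof -
  have "0 < \<eta> * \<mu>" using eta_pos mu_pos by simp
  hence "1 + \<eta> * \<mu> \<noteq> 0" by simp
  hence "(1 + \<eta> * \<mu>) *\<^sub>R x' = x - \<eta> *\<^sub>R (gF xg - \<mu> *\<^sub>R xg + y')"
    using apapc_step_components(2)[OF assms(1)] by (simp add: xg_def)
  also have "gF xg - \<mu> *\<^sub>R xg + y' = (gF xg - gF xs) - \<mu> *\<^sub>R xg + (y' + gF xs)"
    by (simp add: algebra_simps)
  finally show ?thesis .
qed

text \<open>Summing the primal and dual energy identities cancels the cross term
  \<open>\<langle>y\<^sup>k\<^sup>+\<^sup>1 - y\<^sup>*, x\<^sup>k\<^sup>+\<^sup>1 - x\<^sup>*\<rangle>\<close>; the gradient coupling is then bounded by
  \<open>gradient_gap_lower_bound\<close>.\<close>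
lemma step_descent:
  assumes z: "y + gF xs = W z"
    and step: "apapc_step gF W \<eta> \<theta> \<mu> \<tau> (x, y, xf) = (x', y', xf')"
  defines "xg \<equiv> \<tau> *\<^sub>R x + (1 - \<tau>) *\<^sub>R xf"
  obtains z' where "y' + gF xs = W z'"
    and "(1/\<eta>) * (norm (x' - xs))\<^sup>2 + \<mu> * (norm (x' - xs))\<^sup>2 + dual_potential (W z')
      + ((2 - \<tau>) / \<tau>) * bregman F gF xf' xs
      + (1/(2*\<eta>)) * (norm (x' - x))\<^sup>2 + \<mu> * (norm (x' - xg))\<^sup>2 + bregman F gF xg xs
      \<le> lyapunov (x, y, xf)"
proof -
  define h where "h = inverse (1 + \<eta> * \<mu>) *\<^sub>R (x - \<eta> *\<^sub>R (gF xg - \<mu> *\<^sub>R xg + y))"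
  define z' where "z' = z + \<theta> *\<^sub>R h"
  have y': "y' = y + \<theta> *\<^sub>R W h" and x': "x' = inverse (1 + \<eta> * \<mu>) *\<^sub>R (x - \<eta> *\<^sub>R (gF xg - \<mu> *\<^sub>R xg + y'))"
    and xf': "xf' = xg + (2 * \<tau> / (2 - \<tau>)) *\<^sub>R (x' - x)"
    using apapc_step_components[OF step] by (simp_all add: h_def xg_def)
  have Wz': "y' + gF xs = W z'"
    using z by (simp add: y' z'_def linear_add[OF W_linear] linear_cmul[OF W_linear] algebra_simps)
  have "x' = h - (\<eta> / (1 + \<eta> * \<mu>) * \<theta>) *\<^sub>R W h"
    unfolding x' h_def y' by (simp add: algebra_simps divide_inverse)
  moreover have "inner (W z') xs = 0" using W_symmetric[of z' xs] xs_kernel by simp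
  ultimately have "inner (W z') (x' - xs) = inner (W (z + \<theta> *\<^sub>R h)) (h - (\<eta> / (1 + \<eta> * \<mu>) * \<theta>) *\<^sub>R W h)"
    by (simp add: inner_diff_right z'_def)
  hence dual: "dual_potential (W z') = dual_potential (W z)
      + 2 * inner (W z') (x' - xs) - \<theta> * inner h (W h) + \<eta> / (1 + \<eta> * \<mu>) * \<theta>\<^sup>2 * (norm (W h))\<^sup>2"
    unfolding dual_potential_image z'_def
    using dual_potential_identity[OF W_linear W_symmetric, of \<theta> z h "\<eta> / (1 + \<eta> * \<mu>)"] theta_pos by simp
  note primal = primal_update_identity[OF step_primal_update[OF step, folded xg_def, unfolded Wz'], of xs]
  have gap: "2 * bregman F gF xs xg + bregman F gF xg xs
      + (2 * (1 - \<tau>) / \<tau>) * bregman F gF xf xg - (2 * (1 - \<tau>) / \<tau>) * bregman F gF xf xs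
      + ((2 - \<tau>) / \<tau>) * bregman F gF xf' xs - 2 * \<tau> * L / (2 - \<tau>) * (norm (x' - x))\<^sup>2
    \<le> 2 * inner (gF xg - gF xs) (x' - xs)"
    using tau_le_1
    by (intro gradient_gap_lower_bound[OF bregman_upper tau_pos _ xg_def[THEN meta_eq_to_obj_eq] xf']) simp
  have "\<mu> * (norm (xg - xs))\<^sup>2 \<le> 2 * bregman F gF xs xg"
    using bregman_lower[of xs xg] by (simp add: norm_minus_commute)
  moreover have "0 \<le> (2 * (1 - \<tau>) / \<tau>) * bregman F gF xf xg"
    using tau_pos tau_le_1 bregman_nonneg by simp
  moreover have "2 * \<tau> * L / (2 - \<tau>) * (norm (x' - x))\<^sup>2 \<le> (1/(2*\<eta>)) * (norm (x' - x))\<^sup>2"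
    using extrapolation_weight_le by (rule mult_right_mono) simp
  ultimately have "(1/\<eta>) * (norm (x' - xs))\<^sup>2 + \<mu> * (norm (x' - xs))\<^sup>2 + dual_potential (W z')
      + ((2 - \<tau>) / \<tau>) * bregman F gF xf' xs
      + (1/(2*\<eta>)) * (norm (x' - x))\<^sup>2 + \<mu> * (norm (x' - xg))\<^sup>2 + bregman F gF xg xs
      \<le> (1/\<eta>) * (norm (x - xs))\<^sup>2 + dual_potential (W z) + (2 * (1 - \<tau>) / \<tau>) * bregman F gF xf xs"
    using primal eta_pos dual gap dual_correction_le[of h] by simp
  with Wz' show ?thesis by (intro that) (simp_all add: lyapunov_def z)
qed

lemma step_dual_error:
  assumes "apapc_step gF W \<eta> \<theta> \<mu> \<tau> (x, y, xf) = (x', y', xf')"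
  defines "xg \<equiv> \<tau> *\<^sub>R x + (1 - \<tau>) *\<^sub>R xf"
  shows "y' + gF xs = - ((1/\<eta>) *\<^sub>R (x' - x) + (gF xg - gF xs) + \<mu> *\<^sub>R (x' - xg))"
proof -
  have "x - x' = \<eta> *\<^sub>R ((gF xg - gF xs) + \<mu> *\<^sub>R (x' - xg) + (y' + gF xs))"
    using update_difference[OF step_primal_update[OF assms(1), folded xg_def]] .
  hence "(gF xg - gF xs) + \<mu> *\<^sub>R (x' - xg) + (y' + gF xs) = (1/\<eta>) *\<^sub>R (x - x')"
    using eta_pos by simp
  hence "y' + gF xs = (1/\<eta>) *\<^sub>R (x - x') - (gF xg - gF xs) - \<mu> *\<^sub>R (x' - xg)"
    by (metis add_diff_cancel_left' diff_diff_eq add.commute)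
  also have "\<dots> = - ((1/\<eta>) *\<^sub>R (x' - x) + (gF xg - gF xs) + \<mu> *\<^sub>R (x' - xg))"
    by (simp add: algebra_simps)
  finally show ?thesis .
qed

lemma bregman_weight_le: "(1 + \<delta>) * (2 * (1 - \<tau>) / \<tau>) \<le> (2 - \<tau>) / \<tau>"
proof -
  have "(1 + \<delta>) * (2 * (1 - \<tau>)) \<le> 2 - \<tau>" using delta_le_tau by (simp add: algebra_simps)
  hence "(1 + \<delta>) * (2 * (1 - \<tau>)) / \<tau> \<le> (2 - \<tau>) / \<tau>" using tau_pos by (simp add: divide_right_mono)
  thus ?thesis by simp
qed

lemma step_contraction:
  assumes "y + gF xs \<in> range W"
  shows "(1 + \<delta>) * lyapunov (apapc_step gF W \<eta> \<theta> \<mu> \<tau> (x, y, xf)) \<le> lyapunov (x, y, xf)"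
proof -
  obtain z where z: "y + gF xs = W z" using assms by blast
  obtain x' y' xf' where step: "apapc_step gF W \<eta> \<theta> \<mu> \<tau> (x, y, xf) = (x', y', xf')"
    by (metis prod_cases3)
  define xg where "xg = \<tau> *\<^sub>R x + (1 - \<tau>) *\<^sub>R xf"
  obtain z' where z': "y' + gF xs = W z'"
    and descent: "(1/\<eta>) * (norm (x' - xs))\<^sup>2 + \<mu> * (norm (x' - xs))\<^sup>2 + dual_potential (W z')
      + ((2 - \<tau>) / \<tau>) * bregman F gF xf' xs
      + (1/(2*\<eta>)) * (norm (x' - x))\<^sup>2 + \<mu> * (norm (x' - xg))\<^sup>2 + bregman F gF xg xs
      \<le> lyapunov (x, y, xf)"
    using step_descent[OF z step] unfolding xg_def by blast
  have "0 \<le> \<eta> / (1 + \<eta> * \<mu>)" "0 \<le> \<mu>" using eta_pos mu_pos by simp_all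
  with step_dual_error[OF step, folded xg_def, unfolded z']
  have residual: "\<delta> * dual_potential (W z')
      \<le> (1/(2*\<eta>)) * (norm (x' - x))\<^sup>2 + \<mu> * (norm (x' - xg))\<^sup>2 + bregman F gF xg xs"
    unfolding dual_potential_image
    by (intro dual_potential_residual_bound[OF lmin_bound lmin_pos eta_pos theta_pos _ delta_nonneg _
        theta_eta_lmax _ cocoercive delta_chi delta_chi_L delta_chi_mu bregman_nonneg])
  have "\<delta> * (1/\<eta>) \<le> \<mu>" using delta_le_eta_mu eta_pos by (simp add: field_simps)
  hence "\<delta> * ((1/\<eta>) * (norm (x' - xs))\<^sup>2) \<le> \<mu> * (norm (x' - xs))\<^sup>2"
    by (metis mult.assoc mult_right_mono zero_le_power2)
  moreover have "(1 + \<delta>) * ((2 * (1 - \<tau>) / \<tau>) * bregman F gF xf' xs) \<le> ((2 - \<tau>) / \<tau>) * bregman F gF xf' xs"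
    using bregman_weight_le bregman_nonneg[of xf' xs] by (metis mult.assoc mult_right_mono)
  moreover have "(1 + \<delta>) * lyapunov (x', y', xf')
    = (1/\<eta>) * (norm (x' - xs))\<^sup>2 + dual_potential (W z') + \<delta> * ((1/\<eta>) * (norm (x' - xs))\<^sup>2)
      + \<delta> * dual_potential (W z') + (1 + \<delta>) * ((2 * (1 - \<tau>) / \<tau>) * bregman F gF xf' xs)"
    by (simp add: lyapunov_def z' algebra_simps add_divide_distrib)
  ultimately show ?thesis
    unfolding step using descent residual by linarith
qed

lemma step_preserves_range:
  assumes "y + gF xs \<in> range W"
  shows "fst (snd (apapc_step gF W \<eta> \<theta> \<mu> \<tau> (x, y, xf))) + gF xs \<in> range W"
proof -
  obtain z where "y + gF xs = W z" using assms by blast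
  moreover obtain x' y' xf' where step: "apapc_step gF W \<eta> \<theta> \<mu> \<tau> (x, y, xf) = (x', y', xf')"
    by (metis prod_cases3)
  ultimately obtain z' where "y' + gF xs = W z'" by (rule step_descent)
  thus ?thesis unfolding step by simp
qed

lemma apapc_dual_error_in_range:
  assumes "y0 + gF xs \<in> range W"
  shows "fst (snd (apapc gF W \<eta> \<theta> \<mu> \<tau> x0 y0 k)) + gF xs \<in> range W"
proof (induction k)
  case (Suc k)
  thus ?case using step_preserves_range
    by (metis apapc.simps(2) prod.collapse)
qed (simp add: assms)

lemma lyapunov_decay:
  assumes "y0 + gF xs \<in> range W"
  shows "(1 + \<delta>) ^ k * lyapunov (apapc gF W \<eta> \<theta> \<mu> \<tau> x0 y0 k) \<le> lyapunov (x0, y0, x0)"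
proof (induction k)
  case (Suc k)
  have "(1 + \<delta>) * lyapunov (apapc gF W \<eta> \<theta> \<mu> \<tau> x0 y0 (Suc k)) \<le> lyapunov (apapc gF W \<eta> \<theta> \<mu> \<tau> x0 y0 k)"
    using step_contraction apapc_dual_error_in_range[OF assms, where k = k] by (metis apapc.simps(2) prod.collapse)
  hence "(1 + \<delta>) ^ Suc k * lyapunov (apapc gF W \<eta> \<theta> \<mu> \<tau> x0 y0 (Suc k))
      \<le> (1 + \<delta>) ^ k * lyapunov (apapc gF W \<eta> \<theta> \<mu> \<tau> x0 y0 k)"
    using delta_nonneg by (simp add: mult.assoc mult_left_mono)
  with Suc show ?case by linarith
qed simp

lemma lyapunov_lower:
  assumes "fst (snd s) + gF xs \<in> range W"
  shows "(1/\<eta>) * (norm (fst s - xs))\<^sup>2 + (2 * (1 - \<tau>) / \<tau>) * bregman F gF (snd (snd s)) xs \<le> lyapunov s"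
    and "(1/\<eta>) * (norm (fst s - xs))\<^sup>2 \<le> lyapunov s"
proof -
  have "0 \<le> (2 * (1 - \<tau>) / \<tau>) * bregman F gF (snd (snd s)) xs"
    using tau_pos tau_le_1 bregman_nonneg by simp
  moreover show "(1/\<eta>) * (norm (fst s - xs))\<^sup>2 + (2 * (1 - \<tau>) / \<tau>) * bregman F gF (snd (snd s)) xs
      \<le> lyapunov s"
    using assms dual_potential_nonneg by (auto simp: lyapunov_def split: prod.split)
  ultimately show "(1/\<eta>) * (norm (fst s - xs))\<^sup>2 \<le> lyapunov s" by linarith
qed

end

section \<open>Parameters and iteration count\<close>

lemma sqrt_ratio_identities:
  fixes \<kappa> c :: real
  assumes "0 < \<kappa>" "0 \<le> c"
  shows "sqrt (c / \<kappa>) * \<kappa> = sqrt (\<kappa> * c)" and "sqrt (\<kappa> * c) * sqrt (c / \<kappa>) = c"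
proof -
  have "sqrt (c / \<kappa>) * \<kappa> = sqrt (c / \<kappa>) * sqrt (\<kappa> * \<kappa>)" using assms by simp
  also have "\<dots> = sqrt (c / \<kappa> * (\<kappa> * \<kappa>))" by (simp only: real_sqrt_mult)
  also have "c / \<kappa> * (\<kappa> * \<kappa>) = \<kappa> * c" using assms by (simp add: field_simps)
  finally show "sqrt (c / \<kappa>) * \<kappa> = sqrt (\<kappa> * c)" .
  have "sqrt (\<kappa> * c) * sqrt (c / \<kappa>) = sqrt (c * c)"
    using assms by (simp add: real_sqrt_mult[symmetric] field_simps)
  thus "sqrt (\<kappa> * c) * sqrt (c / \<kappa>) = c" using assms by simp
qed

lemma step_rule_bounds:
  fixes \<kappa> c :: real
  assumes \<kappa>: "1 \<le> \<kappa>" and c: "1 \<le> c"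
  defines "\<tau> \<equiv> min 1 ((1/2) * sqrt (c / \<kappa>))"
    and "\<delta> \<equiv> (1/4) * min (1 / sqrt (\<kappa> * c)) (1 / c)"
  shows "0 < \<tau>" "\<tau> \<le> 1" "0 \<le> \<delta>" "4 * \<delta> * (\<tau> * \<kappa>) \<le> 1" "2 * \<delta> \<le> \<tau>"
    "4 * \<delta> * c \<le> 1" "2 * (\<delta> * c) \<le> \<tau>" "\<delta> * c \<le> \<tau> * \<kappa>"
proof -
  define s r where "s = sqrt (\<kappa> * c)" and "r = sqrt (c / \<kappa>)"
  have s1: "1 \<le> s" unfolding s_def using \<kappa> c mult_mono[of 1 \<kappa> 1 c] by simp
  have r0: "0 < r" unfolding r_def using \<kappa> c by simp
  have rk: "r * \<kappa> = s" and sr: "s * r = c"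
    unfolding r_def s_def using sqrt_ratio_identities[of \<kappa> c] \<kappa> c by simp_all
  have \<tau>r: "\<tau> = min 1 (r / 2)" and \<delta>s: "\<delta> = (1/4) * min (1 / s) (1 / c)"
    unfolding \<tau>_def \<delta>_def r_def s_def by simp_all
  have \<delta>1: "\<delta> * (4 * s) \<le> 1" and \<delta>2: "\<delta> * (4 * c) \<le> 1"
    using s1 c unfolding \<delta>s by (simp_all add: field_simps min_def)
  show "0 < \<tau>" "\<tau> \<le> 1" using r0 unfolding \<tau>r by simp_all
  show "0 \<le> \<delta>" using s1 c unfolding \<delta>s by simp
  show "4 * \<delta> * c \<le> 1" using \<delta>2 by simp
  have "\<tau> * \<kappa> \<le> r / 2 * \<kappa>" using \<kappa> unfolding \<tau>r by (intro mult_right_mono) auto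
  hence "\<tau> * \<kappa> \<le> s / 2" using rk by simp
  hence "4 * \<delta> * (\<tau> * \<kappa>) \<le> 4 * \<delta> * (s / 2)" using \<open>0 \<le> \<delta>\<close> by (intro mult_left_mono) auto
  also have "4 * \<delta> * (s / 2) = \<delta> * (4 * s) / 2" by simp
  finally show "4 * \<delta> * (\<tau> * \<kappa>) \<le> 1" using \<delta>1 by linarith
  have "1 \<le> s * r" using sr c by simp
  hence "1 / (2 * s) \<le> r / 2" using s1 by (simp add: field_simps)
  moreover have "1 / (2 * s) \<le> 1" using s1 by simp
  moreover have "2 * \<delta> \<le> 1 / (2 * s)" using \<delta>1 s1 by (simp add: field_simps)
  ultimately show "2 * \<delta> \<le> \<tau>" unfolding \<tau>r min.bounded_iff by (meson order_trans)
  have "\<delta> * c = (\<delta> * s) * r" using sr by (simp add: mult.assoc)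
  also have "\<dots> \<le> (1/4) * r" using \<delta>1 r0 by (intro mult_right_mono) auto
  finally have "\<delta> * c \<le> r / 4" by simp
  moreover have "\<delta> * c \<le> 1/4" using \<delta>2 by simp
  ultimately show "2 * (\<delta> * c) \<le> \<tau>" unfolding \<tau>r by simp
  have "r * 1 \<le> r * \<kappa>" using \<kappa> r0 by (intro mult_left_mono) auto
  thus "\<delta> * c \<le> \<tau> * \<kappa>"
    using \<open>\<delta> * c \<le> r / 4\<close> \<open>\<delta> * c \<le> 1/4\<close> \<kappa> r0 unfolding \<tau>r min_def
    by (split if_split) linarith
qed

lemma apapc_parameter_conditions:
  fixes c L \<mu> :: real
  assumes \<mu>: "0 < \<mu>" "\<mu> \<le> L" and c: "1 \<le> c"
  defines "\<kappa> \<equiv> L / \<mu>"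
  defines "\<tau> \<equiv> min 1 ((1/2) * sqrt (c / \<kappa>))" and "\<delta> \<equiv> (1/4) * min (1 / sqrt (\<kappa> * c)) (1 / c)"
  defines "\<eta> \<equiv> 1 / (4 * \<tau> * L)"
  shows "0 < \<tau>" "\<tau> \<le> 1" "0 < \<eta>" "0 \<le> \<delta>" "\<delta> \<le> \<eta> * \<mu>" "2 * (1 - \<tau>) * \<delta> \<le> \<tau>"
    "4 * \<delta> * c \<le> 1" "8 * \<delta> * \<eta> * c * L \<le> 1" "4 * \<delta> * \<eta> * c * \<mu> \<le> 1" "4 * \<eta> * \<tau> * L \<le> 2 - \<tau>"
proof -
  have \<kappa>: "1 \<le> \<kappa>" using \<mu> by (simp add: \<kappa>_def)
  note R = step_rule_bounds[OF \<kappa> c, folded \<tau>_def \<delta>_def]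
  have L: "0 < L" using \<mu> by simp
  have \<eta>L: "\<eta> * L = 1 / (4 * \<tau>)" and \<eta>\<mu>: "\<eta> * \<mu> = 1 / (4 * (\<tau> * \<kappa>))"
    using L \<mu> R(1) by (simp_all add: \<eta>_def \<kappa>_def field_simps)
  show "0 < \<tau>" "\<tau> \<le> 1" "0 \<le> \<delta>" "4 * \<delta> * c \<le> 1" by (fact R)+
  show "0 < \<eta>" using R(1) L by (simp add: \<eta>_def)
  show "\<delta> \<le> \<eta> * \<mu>" using R(1) R(4) \<kappa> by (simp add: \<eta>\<mu> field_simps)
  have "(1 - \<tau>) * (2 * \<delta>) \<le> 1 * (2 * \<delta>)" using R(1,3) by (intro mult_right_mono) auto
  thus "2 * (1 - \<tau>) * \<delta> \<le> \<tau>" using R(5) by (simp add: algebra_simps)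
  have "8 * \<delta> * \<eta> * c * L = 8 * (\<delta> * c) * (\<eta> * L)" by (simp add: mult_ac)
  also have "\<dots> = 2 * (\<delta> * c) / \<tau>" unfolding \<eta>L by simp
  also have "\<dots> \<le> 1" using R(1,7) by (simp add: pos_divide_le_eq)
  finally show "8 * \<delta> * \<eta> * c * L \<le> 1" .
  have "4 * \<delta> * \<eta> * c * \<mu> = 4 * (\<delta> * c) * (\<eta> * \<mu>)" by (simp add: mult_ac)
  also have "\<dots> = (\<delta> * c) / (\<tau> * \<kappa>)" unfolding \<eta>\<mu> by simp
  also have "\<dots> \<le> 1" using R(1,8) \<kappa> by (simp add: pos_divide_le_eq)
  finally show "4 * \<delta> * \<eta> * c * \<mu> \<le> 1" .
  have "4 * \<eta> * \<tau> * L = 4 * \<tau> * (\<eta> * L)" by (simp add: mult_ac)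
  hence "4 * \<eta> * \<tau> * L = 1" unfolding \<eta>L using R(1) by simp
  thus "4 * \<eta> * \<tau> * L \<le> 2 - \<tau>" using R(2) by simp
qed

lemma min_inverse_eq_inverse_max:
  fixes a b :: real
  assumes "0 < a" "0 < b"
  shows "min (1 / a) (1 / b) = 1 / max a b"
proof (cases "a \<le> b")
  case True
  hence "1 / b \<le> 1 / a" using assms by (simp add: frac_le)
  thus ?thesis using True by (simp add: min_def max_def)
next
  case False
  hence "1 / a \<le> 1 / b" using assms by (simp add: frac_le)
  thus ?thesis using False by (simp add: min_def max_def)
qed

lemma geometric_rate_iteration_count:
  fixes A \<epsilon> a b :: real and k :: nat
  assumes ab: "0 < a" "0 < b" and A: "0 \<le> A" and \<epsilon>: "0 < \<epsilon>"
    and k: "(1 + 4 * max a b) * ln (A / \<epsilon>) \<le> real k"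
  shows "A * inverse ((1 + (1/4) * min (1 / a) (1 / b)) ^ k) \<le> \<epsilon>"
proof -
  define M where "M = max a b"
  have M: "0 < M" using ab by (simp add: M_def)
  have "min (1 / a) (1 / b) = 1 / M" unfolding M_def by (rule min_inverse_eq_inverse_max[OF ab])
  hence rate_eq: "1 + (1/4) * min (1 / a) (1 / b) = 1 + 1 / (4 * M)" by simp
  define \<rho> where "\<rho> = 1 + 1 / (4 * M)"
  have \<rho>1: "1 \<le> \<rho>" using M by (simp add: \<rho>_def)
  show ?thesis
  proof (cases "A \<le> \<epsilon>")
    case True
    have "inverse (\<rho> ^ k) \<le> 1" using \<rho>1 by (simp add: inverse_le_1_iff one_le_power)
    hence "A * inverse (\<rho> ^ k) \<le> A" using A by (rule mult_left_le)
    thus ?thesis using True unfolding rate_eq \<rho>_def[symmetric] by linarith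
  next
    case False
    have "1 - 1 / \<rho> \<le> ln \<rho>"
      using ln_le_minus_one[of "1 / \<rho>"] \<rho>1 by (simp add: ln_div)
    moreover have "1 - 1 / \<rho> = 1 / (1 + 4 * M)" using M by (simp add: \<rho>_def field_simps)
    ultimately have lr: "1 / (1 + 4 * M) \<le> ln \<rho>" by simp
    have "ln (A / \<epsilon>) \<le> real k / (1 + 4 * M)" using k M by (simp add: M_def[symmetric] field_simps mult.commute)
    also have "\<dots> = real k * (1 / (1 + 4 * M))" by simp
    also have "\<dots> \<le> real k * ln \<rho>" using lr by (intro mult_left_mono) auto
    also have "\<dots> = ln (\<rho> ^ k)" using \<rho>1 by (simp add: ln_realpow)
    finally have "A / \<epsilon> \<le> \<rho> ^ k" using False \<epsilon> \<rho>1 by (subst (asm) ln_le_cancel_iff) auto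
    hence "A \<le> \<rho> ^ k * \<epsilon>" by (subst (asm) pos_divide_le_eq[OF \<epsilon>])
    moreover have "0 < \<rho> ^ k" using \<rho>1 by simp
    ultimately have "A / \<rho> ^ k \<le> \<epsilon>" by (subst pos_divide_le_eq) (simp_all add: mult.commute)
    thus ?thesis unfolding rate_eq \<rho>_def[symmetric] by (simp only: divide_inverse)
  qed
qed

section \<open>Linear convergence\<close>

lemma apapc_contraction_instance:
  fixes F :: "'a::euclidean_space \<Rightarrow> real" and gF W :: "'a \<Rightarrow> 'a" and \<mu> L :: real and xs :: 'a
  assumes grad: "\<And>x. (F has_derivative (\<lambda>h. inner (gF x) h)) (at x)"
    and sconv: "strongly_convex \<mu> F"
    and smooth: "\<And>x y. norm (gF x - gF y) \<le> L * norm (x - y)"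
    and \<mu>: "0 < \<mu>" "\<mu> \<le> L"
    and W_lin: "linear W" and W_sym: "\<And>x y. inner (W x) y = inner x (W y)"
    and W_psd: "\<And>x. 0 \<le> inner x (W x)" and W_nonzero: "\<exists>u. W u \<noteq> 0"
    and xs_kernel: "W xs = 0"
  defines "\<kappa> \<equiv> L / \<mu>"
  defines "\<tau> \<equiv> min 1 ((1/2) * sqrt (chi W / \<kappa>))"
    and "\<delta> \<equiv> (1/4) * min (1 / sqrt (\<kappa> * chi W)) (1 / chi W)"
  defines "\<eta> \<equiv> 1 / (4 * \<tau> * L)"
  defines "\<theta> \<equiv> 1 / (\<eta> * lambda_max W)"
  shows "apapc_contraction F gF W \<mu> L (lambda_min_pos W) (lambda_max W) \<eta> \<theta> \<tau> \<delta> xs"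
proof -
  note spectrum = lambda_min_pos_bounds[OF W_lin W_sym W_psd W_nonzero]
  have "1 \<le> chi W" using spectrum(1,2) by (simp add: chi_def)
  note P = apapc_parameter_conditions[OF \<mu> this, folded \<kappa>_def, folded \<tau>_def \<delta>_def, folded \<eta>_def,
      unfolded chi_def]
  have "0 < lambda_max W" using spectrum(1,2) by linarith
  hence \<theta>: "0 < \<theta>" "\<theta> * \<eta> * lambda_max W = 1" using P(3) by (simp_all add: \<theta>_def)
  have bregman: "\<mu> / 2 * (norm (u - v))\<^sup>2 \<le> bregman F gF u v" "bregman F gF u v \<le> L / 2 * (norm (u - v))\<^sup>2"
    for u v using strongly_convex_bregman_lower[OF grad sconv] bregman_le_of_lipschitz_gradient[OF grad smooth] .
  have "0 \<le> bregman F gF u v" for u v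
  proof -
    have "0 \<le> \<mu> / 2 * (norm (u - v))\<^sup>2" using \<mu>(1) by simp
    thus ?thesis using bregman(1)[of u v] by linarith
  qed
  moreover have "0 < L" using \<mu> by simp
  ultimately have cocoercive: "(norm (gF u - gF v))\<^sup>2 \<le> 2 * L * bregman F gF u v" for u v
    using bregman_cocoercive bregman(2) by blast
  show ?thesis
    by (unfold_locales; (fact bregman cocoercive linear_add[OF W_lin] linear_cmul[OF W_lin] W_sym xs_kernel \<theta>
        spectrum(1) \<mu>(1) P norm_image_sq_le_lambda_max[OF W_lin W_sym W_psd]
        lambda_min_pos_le_norm_image_sq[OF W_lin W_sym W_psd W_nonzero])?)
qed

lemma apapc_linear_convergence:
  fixes F :: "'a::euclidean_space \<Rightarrow> real" and gF W :: "'a \<Rightarrow> 'a" and \<mu> L :: real and xs x0 y0 :: 'a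
  assumes grad: "\<And>x. (F has_derivative (\<lambda>h. inner (gF x) h)) (at x)"
    and sconv: "strongly_convex \<mu> F"
    and smooth: "\<And>x y. norm (gF x - gF y) \<le> L * norm (x - y)"
    and \<mu>: "0 < \<mu>" "\<mu> \<le> L"
    and W_lin: "linear W" and W_sym: "\<And>x y. inner (W x) y = inner x (W y)"
    and W_psd: "\<And>x. 0 \<le> inner x (W x)" and W_nonzero: "\<exists>u. W u \<noteq> 0"
    and xs_kernel: "W xs = 0" and gradient_range: "gF xs \<in> range W" and y0_range: "y0 \<in> range W"
  defines "\<kappa> \<equiv> L / \<mu>"
  defines "\<tau> \<equiv> min 1 ((1/2) * sqrt (chi W / \<kappa>))"
  defines "\<eta> \<equiv> 1 / (4 * \<tau> * L)"
  defines "\<theta> \<equiv> 1 / (\<eta> * lambda_max W)"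
    and "\<rho> \<equiv> 1 + (1/4) * min (1 / sqrt (\<kappa> * chi W)) (1 / chi W)"
  defines "C \<equiv> (1/\<eta>) * (norm (x0 - xs))\<^sup>2 + (1/\<theta>) * Wdag_sqnorm W (y0 + gF xs)
      + (2 * (1 - \<tau>) / \<tau>) * bregman F gF x0 xs"
  shows "(1/\<eta>) * (norm (fst (apapc gF W \<eta> \<theta> \<mu> \<tau> x0 y0 k) - xs))\<^sup>2
      + (2 * (1 - \<tau>) / \<tau>) * bregman F gF (snd (snd (apapc gF W \<eta> \<theta> \<mu> \<tau> x0 y0 k))) xs
    \<le> inverse (\<rho> ^ k) * C" (is "?lhs k \<le> _")
    and "0 < \<epsilon> \<Longrightarrow> (1 + 4 * max (sqrt (\<kappa> * chi W)) (chi W)) * ln (\<eta> * C / \<epsilon>) \<le> real k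
      \<Longrightarrow> (norm (fst (apapc gF W \<eta> \<theta> \<mu> \<tau> x0 y0 k) - xs))\<^sup>2 \<le> \<epsilon>"
proof -
  define \<delta> where "\<delta> = (1/4) * min (1 / sqrt (\<kappa> * chi W)) (1 / chi W)"
  interpret apapc_contraction F gF W \<mu> L "lambda_min_pos W" "lambda_max W" \<eta> \<theta> \<tau> \<delta> xs
    using apapc_contraction_instance[OF grad sconv smooth \<mu> W_lin W_sym W_psd W_nonzero xs_kernel]
    unfolding \<kappa>_def \<tau>_def \<eta>_def \<theta>_def \<delta>_def .
  have range: "y0 + gF xs \<in> range W"
    using y0_range gradient_range subspace_add[OF linear_subspace_image[OF W_lin subspace_UNIV]] by blast
  have "\<rho> = 1 + \<delta>" by (simp add: \<rho>_def \<delta>_def)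
  hence \<rho>: "\<rho> = 1 + \<delta>" "0 < \<rho> ^ k" using delta_nonneg by simp_all
  have initial: "lyapunov (x0, y0, x0) \<le> C"
    using \<mu> eta_pos by (simp add: lyapunov_def dual_potential_def C_def)
  have "(1/\<eta>) * (norm (x0 - xs))\<^sup>2 \<le> lyapunov (x0, y0, x0)"
    using lyapunov_lower(2)[of "(x0, y0, x0)"] range by simp
  moreover have "0 \<le> (1/\<eta>) * (norm (x0 - xs))\<^sup>2" using eta_pos by simp
  ultimately have "0 \<le> C" using initial by linarith
  from initial have decay: "lyapunov (apapc gF W \<eta> \<theta> \<mu> \<tau> x0 y0 k) \<le> inverse (\<rho> ^ k) * C"
    using lyapunov_decay[OF range, of k x0] \<rho> by (simp add: field_simps)
  note lower = lyapunov_lower[OF apapc_dual_error_in_range[OF range]]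
  show "?lhs k \<le> inverse (\<rho> ^ k) * C" using lower(1) decay by (rule order_trans)
  assume \<epsilon>: "0 < \<epsilon>" and k: "(1 + 4 * max (sqrt (\<kappa> * chi W)) (chi W)) * ln (\<eta> * C / \<epsilon>) \<le> real k"
  have "(1/\<eta>) * (norm (fst (apapc gF W \<eta> \<theta> \<mu> \<tau> x0 y0 k) - xs))\<^sup>2 \<le> inverse (\<rho> ^ k) * C"
    using lower(2) decay by (rule order_trans)
  hence "(norm (fst (apapc gF W \<eta> \<theta> \<mu> \<tau> x0 y0 k) - xs))\<^sup>2 \<le> (\<eta> * C) * inverse (\<rho> ^ k)"
    using eta_pos by (simp add: field_simps)
  also have "\<dots> \<le> \<epsilon>"
    unfolding \<rho>_def
  proof (rule geometric_rate_iteration_count[OF _ _ _ \<epsilon> k])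
    have "1 \<le> chi W"
      using lambda_min_pos_bounds(1,2)[OF W_lin W_sym W_psd W_nonzero] by (simp add: chi_def)
    thus "0 < sqrt (\<kappa> * chi W)" "0 < chi W" using \<mu> by (simp_all add: \<kappa>_def)
    show "0 \<le> \<eta> * C" using eta_pos \<open>0 \<le> C\<close> by simp
  qed
  finally show "(norm (fst (apapc gF W \<eta> \<theta> \<mu> \<tau> x0 y0 k) - xs))\<^sup>2 \<le> \<epsilon>" .
qed

section \<open>The consensus problem\<close>

lemma consensus_kernel_operator_nonzero:
  fixes W :: "real^'d^'n \<Rightarrow> real^'d^'n"
  assumes n: "CARD('n) \<ge> 2" and ker: "{x. W x = 0} = consensus"
  shows "\<exists>u. W u \<noteq> 0"
proof -
  obtain i j :: 'n where ij: "i \<noteq> j"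
    using n card_le_Suc0_iff_eq[of "UNIV :: 'n set"] by fastforce
  obtain v :: "real^'d" where v: "v \<noteq> 0" using nonzero_Basis SOME_Basis by metis
  have "(\<chi> k. if k = i then v else 0) \<notin> consensus"
    unfolding consensus_def using ij v by auto
  thus ?thesis using ker by blast
qed

lemma consensus_first_order_condition:
  fixes F :: "real^'d^'n \<Rightarrow> real"
  assumes grad: "\<And>x. (F has_derivative (\<lambda>h. inner (gF x) h)) (at x)"
    and xs: "xs \<in> consensus" and min: "\<And>x. x \<in> consensus \<Longrightarrow> F xs \<le> F x"
    and v: "v \<in> consensus"
  shows "inner (gF xs) v = 0"
proof -
  have "(xs + t *\<^sub>R v) $ i = (xs + t *\<^sub>R v) $ j" for t i j
  proof -
    have "xs $ i = xs $ j" "v $ i = v $ j" using xs v unfolding consensus_def by auto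
    thus ?thesis by simp
  qed
  hence "xs + t *\<^sub>R v \<in> consensus" for t unfolding consensus_def by blast
  hence "\<forall>t. \<bar>0 - t\<bar> < 1 \<longrightarrow> F (xs + 0 *\<^sub>R v) \<le> F (xs + t *\<^sub>R v)" using min by simp
  from DERIV_local_min[OF has_real_derivative_along_line[OF grad] zero_less_one this]
  show ?thesis by simp
qed

theorem theorem2:
  fixes F :: "real^'d^'n \<Rightarrow> real"
    and gF :: "real^'d^'n \<Rightarrow> real^'d^'n"
    and W :: "real^'d^'n \<Rightarrow> real^'d^'n"
    and \<mu> L :: real
    and x0 y0 xstar :: "real^'d^'n"
  assumes n2: "CARD('n) \<ge> 2"
    and grad: "\<And>x. (F has_derivative (\<lambda>h. inner (gF x) h)) (at x)"
    and sconv: "strongly_convex \<mu> F"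
    and smooth: "\<And>x y. norm (gF x - gF y) \<le> L * norm (x - y)"
    and mu_pos: "0 < \<mu>" and mu_le_L: "\<mu> \<le> L"
    and W_lin: "linear W"
    and W_sym: "\<And>x y. inner (W x) y = inner x (W y)"
    and W_psd: "\<And>x. 0 \<le> inner x (W x)"
    and W_ker: "{x. W x = 0} = consensus"
    and xstar_cons: "xstar \<in> consensus"
    and xstar_min: "\<And>x. x \<in> consensus \<Longrightarrow> F xstar \<le> F x"
    and y0_range: "y0 \<in> range W"
  shows
    "let \<kappa> = L / \<mu>; chiW = chi W;
         \<tau> = min 1 ((1/2) * sqrt (chiW / \<kappa>));
         \<eta> = 1 / (4 * \<tau> * L);
         \<theta> = 1 / (\<eta> * lambda_max W);
         \<alpha> = \<mu>;
         ystar = - gF xstar;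
         xs = (\<lambda>k. fst (apapc gF W \<eta> \<theta> \<alpha> \<tau> x0 y0 k));
         xfs = (\<lambda>k. snd (snd (apapc gF W \<eta> \<theta> \<alpha> \<tau> x0 y0 k)));
         C = (1 / \<eta>) * (norm (x0 - xstar))\<^sup>2 + (1 / \<theta>) * Wdag_sqnorm W (y0 - ystar)
             + (2 * (1 - \<tau>) / \<tau>) * bregman F gF (xfs 0) xstar;
         \<rho> = 1 + (1/4) * min (1 / sqrt (\<kappa> * chiW)) (1 / chiW)
     in (\<forall>k::nat. (1 / \<eta>) * (norm (xs k - xstar))\<^sup>2
                   + (2 * (1 - \<tau>) / \<tau>) * bregman F gF (xfs k) xstar
                 \<le> inverse (\<rho> ^ k) * C)
      \<and> (\<forall>\<epsilon>>0. \<forall>k::nat.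
            real k \<ge> (1 + 4 * max (sqrt (\<kappa> * chiW)) chiW) * ln (\<eta> * C / \<epsilon>)
            \<longrightarrow> (norm (xs k - xstar))\<^sup>2 \<le> \<epsilon>)"
proof -
  have kernel: "W xstar = 0" using W_ker xstar_cons by blast
  have "gF xstar \<in> range W"
  proof (rule symmetric_in_range_if_orthogonal_kernel[OF W_lin W_sym])
    show "inner (gF xstar) v = 0" if "W v = 0" for v
      using consensus_first_order_condition[OF grad xstar_cons xstar_min] that W_ker by blast
  qed
  note rate = apapc_linear_convergence[OF grad sconv smooth mu_pos mu_le_L W_lin W_sym W_psd
      consensus_kernel_operator_nonzero[OF n2 W_ker] kernel this y0_range]
  show ?thesis
    unfolding Let_def apapc.simps(1) prod.sel diff_minus_eq_add by (intro conjI allI impI rate)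
qed

end
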